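(* Let $X$ be a connected, finite, simple $4$-valent graph equipped with an orientation at each vertex, let $k\geq1$, let $N=|V(\mathrm{GC}_{k,0}(X))|$ and let $\lambda_1(\mathrm{GC}_{k,0}(X))\leq\cdots\leq\lambda_N(\mathrm{GC}_{k,0}(X))$ be its Laplacian eigenvalues. Let $\nu_1(k)\leq\cdots\leq\nu_{k^2}(k)$ be the eigenvalues of the adjacency matrix, and $0=\lambda_1(k)\leq\cdots\leq\lambda_{k^2}(k)$ the eigenvalues of the Laplacian, of the $4$-valent $(k,0)$-cluster $\square(k)$. Then for $j=1,\dots,k^2$, $$\lambda_j(\mathrm{GC}_{k,0}(X))\leq 4-\nu_{k^2-j+1}(k),\qquad \lambda_{N-j+1}(\mathrm{GC}_{k,0}(X))\geq 4-\nu_j(k).$$ Moreover, $$\lambda_i(\mathrm{GC}_{k,0}(X))\leq\lambda_t(k)+\delta_{k^2-t+i}(k)\quad\text{for }1\leq i\leq t\leq k^2,$$ $$\lambda_{N-j+1}(\mathrm{GC}_{k,0}(X))\geq\lambda_{k^2-s+1}(k)+\delta_{1+s-j}(k)\quad\text{for }1\leq j\leq s\leq k^2,$$ where $\delta_j(k)=0$ for $j=1,\dots,k^2-4k+4$, $\delta_j(k)=1$ for $j=k^2-4k+5,\dots,k^2-4$, and $\delta_j(k)=2$ for $j=k^2-3,k^2-2,k^2-1,k^2$.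
   Context: The Laplacian of a graph $Y$ acts on $f\in\mathbb{C}^{V(Y)}$ by $(\Delta_Y f)(p)=\deg_Y(p)f(p)-\sum_{q\sim p}f(q)$; eigenvalues are listed with multiplicity in nondecreasing order. An orientation at each vertex is a cyclic ordering of the four edges at each vertex. The $4$-valent $(k,0)$-cluster $\square(k)$: the square with vertices $0,k,(1+i)k,ik$ is subdivided by the square lattice $\mathbb{Z}[i]$ into $k^2$ unit squares; $\square(k)$ is the graph whose vertices are their barycenters, adjacent when the squares share an edge (i.e. the $k\times k$ grid graph; its Laplacian uses its own vertex degrees). Goldberg–Coxeter construction $\mathrm{GC}_{k,0}(X)$: for each $p\in V(X)$ take a copy $\square(p)$ of $\square(k)$ on the square $S$ with vertices $0,k,(1+i)k,ik$, whose four sides are matched with the four edges at $p$ so that the cyclic order at $p$ agrees with the counterclockwise order of the sides. For each edge $e=pq$, place $\square(p)$ on $S$ with $e$ corresponding to the side from $k$ to $(1+i)k$ and $\square(q)$ (preserving orientation) on the adjacent square with vertices $k,2k,(2+i)k,(1+i)k$ with $e$ corresponding to the side from $(1+i)k$ to $k$, and join (identify) the overlapping lattice edges; the result is the $4$-valent graph $\mathrm{GC}_{k,0}(X)$, containing each $\square(p)$ as an induced subgraph. *)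

theory Defs
  imports "HOL-Combinatorics.Permutations" "HOL-Computational_Algebra.Polynomial"
begin

definition adj_matrix :: "'a set \<Rightarrow> ('a \<Rightarrow> 'a \<Rightarrow> bool) \<Rightarrow> 'a \<Rightarrow> 'a \<Rightarrow> real" where
  "adj_matrix S adj u v = (if adj u v then 1 else 0)"

definition lap_matrix :: "'a set \<Rightarrow> ('a \<Rightarrow> 'a \<Rightarrow> bool) \<Rightarrow> 'a \<Rightarrow> 'a \<Rightarrow> real" where
  "lap_matrix S adj u v =
     (if u = v then real (card {w \<in> S. adj u w}) else 0) - (if adj u v then 1 else 0)"

text \<open>Characteristic polynomial det(x I - M) of a matrix indexed by a finite set S (Leibniz formula).\<close>
definition charpoly :: "'a set \<Rightarrow> ('a \<Rightarrow> 'a \<Rightarrow> real) \<Rightarrow> real poly" where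
  "charpoly S M = (\<Sum>\<sigma> \<in> {\<sigma>. \<sigma> permutes S}.
      of_int (sign \<sigma>) * (\<Prod>v\<in>S. [: - M v (\<sigma> v), (if \<sigma> v = v then 1 else 0) :]))"

text \<open>Eigenvalues listed with multiplicity in nondecreasing order (0-based list).\<close>
definition eigenvalues :: "'a set \<Rightarrow> ('a \<Rightarrow> 'a \<Rightarrow> real) \<Rightarrow> real list" where
  "eigenvalues S M = (THE xs. sorted xs \<and> charpoly S M = (\<Prod>x\<leftarrow>xs. [: - x, 1 :]))"

definition simple_graph :: "'v set \<Rightarrow> ('v \<Rightarrow> 'v \<Rightarrow> bool) \<Rightarrow> bool" where
  "simple_graph V E \<longleftrightarrow> finite V \<and> (\<forall>p q. E p q \<longrightarrow> p \<in> V \<and> q \<in> V \<and> E q p \<and> p \<noteq> q)"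

definition connected_graph :: "'v set \<Rightarrow> ('v \<Rightarrow> 'v \<Rightarrow> bool) \<Rightarrow> bool" where
  "connected_graph V E \<longleftrightarrow> V \<noteq> {} \<and> (\<forall>p\<in>V. \<forall>q\<in>V. (p, q) \<in> {(x, y). E x y}\<^sup>*)"

definition four_valent :: "'v set \<Rightarrow> ('v \<Rightarrow> 'v \<Rightarrow> bool) \<Rightarrow> bool" where
  "four_valent V E \<longleftrightarrow> (\<forall>p\<in>V. card {q \<in> V. E p q} = 4)"

text \<open>An orientation at each vertex: the four neighbours of p listed as rot p 0, rot p 1,
  rot p 2, rot p 3, the cyclic order being 0 -> 1 -> 2 -> 3 -> 0.\<close>
definition orientation :: "'v set \<Rightarrow> ('v \<Rightarrow> 'v \<Rightarrow> bool) \<Rightarrow> ('v \<Rightarrow> nat \<Rightarrow> 'v) \<Rightarrow> bool" where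
  "orientation V E rot \<longleftrightarrow> (\<forall>p\<in>V. bij_betw (rot p) {0..<4} {q \<in> V. E p q})"

text \<open>Unit square with lower-left corner (x,y), 0 <= x,y < k, of the square [0,k]^2.\<close>
definition cluster_vertices :: "nat \<Rightarrow> (nat \<times> nat) set" where
  "cluster_vertices k = {0..<k} \<times> {0..<k}"

definition grid_adj :: "nat \<times> nat \<Rightarrow> nat \<times> nat \<Rightarrow> bool" where
  "grid_adj c d \<longleftrightarrow>
     (fst c = fst d \<and> (snd d = snd c + 1 \<or> snd c = snd d + 1)) \<or>
     (snd c = snd d \<and> (fst d = fst c + 1 \<or> fst c = fst d + 1))"

text \<open>Sides of the square [0,k]^2 in counterclockwise order: 0 bottom (0 to k), 1 right (k to (1+i)k),
  2 top ((1+i)k to ik), 3 left (ik to 0).  boundary_cell k a t is the unit square adjacent to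
  side a at position t (t = 0,...,k-1), counted along the counterclockwise direction of the side.\<close>
definition boundary_cell :: "nat \<Rightarrow> nat \<Rightarrow> nat \<Rightarrow> nat \<times> nat" where
  "boundary_cell k a t =
     (if a = 0 then (t, 0)
      else if a = 1 then (k - 1, t)
      else if a = 2 then (k - 1 - t, k - 1)
      else (0, k - 1 - t))"

definition gc_vertices :: "'v set \<Rightarrow> nat \<Rightarrow> ('v \<times> (nat \<times> nat)) set" where
  "gc_vertices V k = V \<times> cluster_vertices k"

text \<open>Side a of the copy of p corresponds to edge p -- rot p a.  Gluing along edge e = pq, with e
  on side a of p and side b of q: the copies are placed (orientation preserving) side by side, so the
  cell at position t along side a of p is adjacent to the cell at position k-1-t along side b of q.\<close>
definition gc_adj :: "('v \<Rightarrow> 'v \<Rightarrow> bool) \<Rightarrow> ('v \<Rightarrow> nat \<Rightarrow> 'v) \<Rightarrow> nat \<Rightarrow>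
    'v \<times> (nat \<times> nat) \<Rightarrow> 'v \<times> (nat \<times> nat) \<Rightarrow> bool" where
  "gc_adj E rot k x y \<longleftrightarrow>
     (fst x = fst y \<and> grid_adj (snd x) (snd y)) \<or>
     (E (fst x) (fst y) \<and>
      (\<exists>a<4. \<exists>b<4. \<exists>t<k. rot (fst x) a = fst y \<and> rot (fst y) b = fst x \<and>
          snd x = boundary_cell k a t \<and> snd y = boundary_cell k b (k - 1 - t)))"

definition delta :: "nat \<Rightarrow> nat \<Rightarrow> real" where
  "delta k j =
     (if int j \<le> int k ^ 2 - 4 * int k + 4 then 0
      else if int j \<le> int k ^ 2 - 4 then 1
      else 2)"

end

(* GC_{k,0}(X) is 4-regular and contains a copy of the cluster for each vertex p of X as an
   induced subgraph.  If z is a function on the copy of p, extended by zero, the Laplacian form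
   of GC_{k,0}(X) at z equals 4|z|^2 - z^T A z, and also z^T L z + sum_c s(c) z(c)^2, where A and
   L are the adjacency matrix and Laplacian of the cluster and s(c) <= 2 counts the sides of the
   big square on which the cell c lies.  Choosing z in the span of suitable eigenvectors of A or
   L, and for the delta terms additionally vanishing on the cells with too many (resp. too few)
   sides, the Courant--Fischer principle turns these identities into the eigenvalue bounds.
   Courant--Fischer is used in the form: if the Rayleigh quotient is at most c on a space of test
   vectors of dimension j, then lambda_j <= c, because by a dimension count that space meets the
   span of the eigenvectors of lambda_j, ..., lambda_N. *)

theory Submission
  imports Defs "Jordan_Normal_Form.Schur_Decomposition"
begin

section \<open>Spectral theorem for real symmetric matrices\<close>

lemma real_symmetric_mat_has_eigenvalue:
  fixes A :: "real mat"
  assumes A: "A \<in> carrier_mat n n" and sym: "A\<^sup>T = A" and n: "n > 0"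
  shows "\<exists>e. eigenvalue A e"
proof -
  let ?Ac = "map_mat complex_of_real A"
  have Ac: "?Ac \<in> carrier_mat n n" using A by auto
  from char_poly_factorized[OF Ac] obtain as where cp: "char_poly ?Ac = (\<Prod>a\<leftarrow>as. [:-a,1:])"
    and len: "length as = n" by blast
  from len n obtain a where a: "a \<in> set as" by (cases as) auto
  have root: "poly (char_poly ?Ac) a = 0" unfolding cp using linear_poly_root[OF a] .
  then have "eigenvalue ?Ac a" using eigenvalue_root_char_poly[OF Ac] by simp
  then obtain v where v: "v \<in> carrier_vec n" "v \<noteq> 0\<^sub>v n" "?Ac *\<^sub>v v = a \<cdot>\<^sub>v v"
    using Ac by (auto simp: eigenvalue_def eigenvector_def)
  have Aij: "A $$ (i,j) = A $$ (j,i)" if "i < n" "j < n" for i j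
    using sym that A by (metis carrier_matD(1) carrier_matD(2) index_transpose_mat(1))
  have Avi: "(\<Sum>j<n. complex_of_real (A$$(i,j)) * v$j) = a * v$i" if i: "i < n" for i
  proof -
    have "(?Ac *\<^sub>v v) $ i = (\<Sum>j<n. complex_of_real (A$$(i,j)) * v$j)"
      using i A v(1) by (auto simp: scalar_prod_def lessThan_atLeast0 intro!: sum.cong)
    then show ?thesis using v(3) v(1) i by simp
  qed
  txt \<open>The Hermitian form \<open>v\<^sup>* A v = a v\<^sup>* v\<close> is real, and \<open>v\<^sup>* v > 0\<close>, so \<open>a\<close> is real.\<close>
  define s where "s = (\<Sum>i<n. cnj (v$i) * (\<Sum>j<n. complex_of_real (A$$(i,j)) * v$j))"
  define r where "r = (\<Sum>i<n. (cmod (v$i))\<^sup>2)"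
  have "s = (\<Sum>i<n. cnj (v$i) * (a * v$i))" unfolding s_def by (rule sum.cong) (simp_all add: Avi)
  also have "\<dots> = a * (\<Sum>i<n. cnj (v$i) * v$i)" by (simp add: sum_distrib_left algebra_simps)
  also have "(\<Sum>i<n. cnj (v$i) * v$i) = complex_of_real r" unfolding r_def of_real_sum
    by (rule sum.cong) (simp_all add: complex_norm_square[symmetric] mult.commute)
  finally have s_eq: "s = a * complex_of_real r" .
  have "cnj s = (\<Sum>j<n. \<Sum>i<n. v$i * complex_of_real (A$$(i,j)) * cnj (v$j))"
    unfolding s_def by (subst sum.swap) (simp add: sum_distrib_left algebra_simps)
  also have "\<dots> = s" unfolding s_def
    by (auto simp: sum_distrib_left algebra_simps Aij intro!: sum.cong)
  finally have s_real: "cnj s = s" .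
  obtain i where i: "i < n" "v $ i \<noteq> 0"
    using v(1,2) by (metis carrier_vecD eq_vecI index_zero_vec(1) index_zero_vec(2))
  have "(cmod (v$i))\<^sup>2 \<le> r" unfolding r_def by (rule member_le_sum) (use i in auto)
  then have "r > 0" using i by (smt (verit) zero_less_power2 norm_eq_zero)
  with s_eq s_real have "cnj a = a" by (metis complex_cnj_complex_of_real complex_cnj_mult
        mult_cancel_right of_real_eq_0_iff less_irrefl)
  then have a_real: "a = complex_of_real (Re a)" by (metis Reals_cnj_iff complex_is_Real_iff of_real_Re)
  have "complex_of_real (poly (char_poly A) (Re a)) = poly (char_poly ?Ac) a"
    using of_real_hom.char_poly_hom[OF A] a_real by (metis of_real_hom.poly_map_poly)
  then have "poly (char_poly A) (Re a) = 0" using root by simp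
  then show ?thesis using eigenvalue_root_char_poly[OF A] by blast
qed

lemma orthogonal_mat_with_first_col:
  fixes u :: "real vec"
  assumes u: "u \<in> carrier_vec n" and u1: "u \<bullet> u = 1"
  obtains W where "W \<in> carrier_mat n n" "W\<^sup>T * W = 1\<^sub>m n" "col W 0 = u"
proof -
  have n: "n > 0" using u u1 by (cases n) (auto simp: scalar_prod_def)
  interpret cof_vec_space n "TYPE(real)" .
  define b where "b = basis_completion u"
  have u0: "u \<noteq> 0\<^sub>v n" using u1 u by auto
  from basis_completion[OF u u0, folded b_def]
  have dist_b: "distinct b" and indep: "\<not> lin_dep (set b)" and bc: "set b \<subseteq> carrier_vec n"
    and hdb: "hd b = u" and len_b: "length b = n" by auto
  from hdb len_b n obtain vs where bv: "b = u # vs" by (cases b, auto)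
  define ws where "ws = gram_schmidt n b"
  from gram_schmidt_result[OF bc dist_b indep ws_def]
  have ws: "set ws \<subseteq> carrier_vec n" "corthogonal ws" "length ws = n" by (auto simp: len_b)
  have ws0: "ws ! 0 = u" unfolding ws_def bv using gram_schmidt_hd[OF u] ws(3) n
    by (metis bv hd_conv_nth list.size(3) neq0_conv ws_def)
  have wsc: "ws ! i \<in> carrier_vec n" if "i < n" for i using ws that by auto
  have real_cscalar: "(x :: real vec) \<bullet>c y = x \<bullet> y" for x y by (simp add: vec_conjugate_real)
  have wpos: "ws ! i \<bullet> ws ! i > 0" if i: "i < n" for i
  proof -
    have "ws ! i \<bullet> ws ! i \<noteq> 0" using ws(2) i ws(3) unfolding corthogonal_def real_cscalar by auto
    moreover have "ws ! i \<bullet> ws ! i \<ge> 0" unfolding scalar_prod_def by (auto intro: sum_nonneg)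
    ultimately show ?thesis by linarith
  qed
  have worth: "ws ! i \<bullet> ws ! j = 0" if "i < n" "j < n" "i \<noteq> j" for i j
    using ws(2) that ws(3) unfolding corthogonal_def real_cscalar by auto
  define W where "W = mat n n (\<lambda>(i, j). ws ! j $ i / sqrt (ws ! j \<bullet> ws ! j))"
  have colW: "col W j = (1 / sqrt (ws ! j \<bullet> ws ! j)) \<cdot>\<^sub>v ws ! j" if "j < n" for j
    unfolding W_def using that wsc[OF that] by (auto simp: col_def)
  have W: "W \<in> carrier_mat n n" unfolding W_def by simp
  have "W\<^sup>T * W = 1\<^sub>m n"
  proof (rule eq_matI)
    fix i j assume "i < dim_row (1\<^sub>m n)" "j < dim_col (1\<^sub>m n)"
    then have i: "i < n" and j: "j < n" by auto
    have "(W\<^sup>T * W) $$ (i, j) = col W i \<bullet> col W j" using W i j by (simp add: index_mult_mat)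
    also have "\<dots> = (ws ! i \<bullet> ws ! j) / (sqrt (ws ! i \<bullet> ws ! i) * sqrt (ws ! j \<bullet> ws ! j))"
      unfolding colW[OF i] colW[OF j] using wsc[OF i] wsc[OF j]
      by (simp add: smult_scalar_prod_distrib scalar_prod_smult_distrib)
    also have "\<dots> = 1\<^sub>m n $$ (i, j)"
      using i j wpos[OF i] worth[OF i j] by (cases "i = j") (simp_all add: real_sqrt_mult[symmetric])
    finally show "(W\<^sup>T * W) $$ (i, j) = 1\<^sub>m n $$ (i, j)" .
  qed (use W in auto)
  moreover have "col W 0 = u" using colW[OF n] ws0 u1 by simp
  ultimately show ?thesis using W that by blast
qed

lemma unit_eigenvector:
  fixes A :: "real mat"
  assumes A: "A \<in> carrier_mat n n" and e: "eigenvalue A e"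
  obtains u where "u \<in> carrier_vec n" "u \<bullet> u = 1" "A *\<^sub>v u = e \<cdot>\<^sub>v u"
proof -
  define v where "v = find_eigenvector A e"
  have v: "v \<in> carrier_vec n" and v0: "v \<noteq> 0\<^sub>v n" and Av: "A *\<^sub>v v = e \<cdot>\<^sub>v v"
    using find_eigenvector[OF A e] A unfolding v_def eigenvector_def by auto
  have vv: "v \<bullet> v > 0"
  proof -
    obtain i where i: "i < n" "v $ i \<noteq> 0"
      using v v0 by (metis carrier_vecD eq_vecI index_zero_vec(1) index_zero_vec(2))
    have "v $ i * v $ i \<le> (\<Sum>j\<in>{0..<n}. v $ j * v $ j)" by (rule member_le_sum) (use i in auto)
    then show ?thesis using v i by (simp add: scalar_prod_def) (smt (verit) not_real_square_gt_zero)
  qed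
  define u where "u = (1 / sqrt (v \<bullet> v)) \<cdot>\<^sub>v v"
  have "u \<in> carrier_vec n" unfolding u_def using v by simp
  moreover have "u \<bullet> u = 1" unfolding u_def using v vv
    by (simp add: smult_scalar_prod_distrib scalar_prod_smult_distrib real_sqrt_mult[symmetric])
  moreover have "A *\<^sub>v u = e \<cdot>\<^sub>v u" unfolding u_def using A v Av
    by (simp add: mult_mat_vec smult_smult_assoc mult.commute)
  ultimately show ?thesis using that by blast
qed

lemma symmetric_mat_first_col_block:
  fixes A :: "real mat"
  assumes A: "A \<in> carrier_mat (Suc m) (Suc m)" and sym: "A\<^sup>T = A"
    and col0: "\<And>i. i < Suc m \<Longrightarrow> A $$ (i, 0) = (if i = 0 then e else 0)"
  defines "A3 \<equiv> mat m m (\<lambda>(i, j). A $$ (Suc i, Suc j))"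
  shows "A3\<^sup>T = A3" and "A = four_block_mat (mat 1 1 (\<lambda>_. e)) (0\<^sub>m 1 m) (0\<^sub>m m 1) A3"
proof -
  have Aij: "A $$ (j, i) = A $$ (i, j)" if "i < Suc m" "j < Suc m" for i j
    using A sym that by (metis carrier_matD(1,2) index_transpose_mat(1))
  show "A3\<^sup>T = A3" unfolding A3_def by (rule eq_matI) (auto simp: Aij)
  show "A = four_block_mat (mat 1 1 (\<lambda>_. e)) (0\<^sub>m 1 m) (0\<^sub>m m 1) A3"
  proof (rule eq_matI)
    fix i j assume "i < dim_row (four_block_mat (mat 1 1 (\<lambda>_. e)) (0\<^sub>m 1 m) (0\<^sub>m m 1) A3)"
      "j < dim_col (four_block_mat (mat 1 1 (\<lambda>_. e)) (0\<^sub>m 1 m) (0\<^sub>m m 1) A3)"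
    then have ij: "i < Suc m" "j < Suc m" by (auto simp: A3_def)
    have row0: "A $$ (0, j) = (if j = 0 then e else 0)" using col0[OF ij(2)] Aij[OF ij(2)] by simp
    show "A $$ (i, j) = four_block_mat (mat 1 1 (\<lambda>_. e)) (0\<^sub>m 1 m) (0\<^sub>m m 1) A3 $$ (i, j)"
      using ij col0 row0 by (cases "i = 0 \<or> j = 0") (auto simp: A3_def)
  qed (use A in \<open>auto simp: A3_def\<close>)
qed

lemma orthogonal_deflation:
  fixes A :: "real mat"
  assumes A: "A \<in> carrier_mat (Suc m) (Suc m)" and sym: "A\<^sup>T = A" and e: "eigenvalue A e"
  obtains W A3 where "W \<in> carrier_mat (Suc m) (Suc m)" "W\<^sup>T * W = 1\<^sub>m (Suc m)"
    "A3 \<in> carrier_mat m m" "A3\<^sup>T = A3"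
    "W\<^sup>T * A * W = four_block_mat (mat 1 1 (\<lambda>_. e)) (0\<^sub>m 1 m) (0\<^sub>m m 1) A3"
proof -
  let ?n = "Suc m"
  obtain u where u: "u \<in> carrier_vec ?n" "u \<bullet> u = 1" and Au: "A *\<^sub>v u = e \<cdot>\<^sub>v u"
    using unit_eigenvector[OF A e] by blast
  obtain W where W: "W \<in> carrier_mat ?n ?n" and WW: "W\<^sup>T * W = 1\<^sub>m ?n" and W0: "col W 0 = u"
    using orthogonal_mat_with_first_col[OF u] by blast
  define A' where "A' = W\<^sup>T * A * W"
  have A'_alt: "A' = W\<^sup>T * (A * W)" unfolding A'_def using W A by (simp add: assoc_mult_mat)
  have sym': "A'\<^sup>T = A'"
  proof -
    have AW: "A * W \<in> carrier_mat ?n ?n" using A W by simp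
    have "A'\<^sup>T = (A * W)\<^sup>T * W" unfolding A'_alt using transpose_mult[OF _ AW, of "W\<^sup>T"] W by simp
    also have "(A * W)\<^sup>T = W\<^sup>T * A" using transpose_mult[OF A W] sym by simp
    finally show ?thesis unfolding A'_def .
  qed
  have col0: "A' $$ (i, 0) = (if i = 0 then e else 0)" if i: "i < ?n" for i
  proof -
    have "A' $$ (i, 0) = row W\<^sup>T i \<bullet> (A *\<^sub>v u)"
      unfolding A'_alt using i W A col_mult2[OF A W, of 0] W0 by (simp add: index_mult_mat)
    also have "\<dots> = e * (row W\<^sup>T i \<bullet> col W 0)"
      unfolding Au W0 using W i u by (simp add: scalar_prod_smult_distrib[of _ ?n])
    also have "row W\<^sup>T i \<bullet> col W 0 = (W\<^sup>T * W) $$ (i, 0)" using i W by (simp add: index_mult_mat)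
    finally show ?thesis using WW i by simp
  qed
  have "A' \<in> carrier_mat ?n ?n" unfolding A'_def using W A by simp
  note block = symmetric_mat_first_col_block[OF this sym' col0]
  show ?thesis by (rule that[OF W WW _ block(1)]) (use block(2) in \<open>simp_all add: A'_def\<close>)
qed

lemma block_diag_mult:
  fixes a b X Y :: "real mat"
  assumes a: "a \<in> carrier_mat 1 1" and b: "b \<in> carrier_mat 1 1"
    and X: "X \<in> carrier_mat m m" and Y: "Y \<in> carrier_mat m m"
  shows "four_block_mat a (0\<^sub>m 1 m) (0\<^sub>m m 1) X * four_block_mat b (0\<^sub>m 1 m) (0\<^sub>m m 1) Y
       = four_block_mat (a * b) (0\<^sub>m 1 m) (0\<^sub>m m 1) (X * Y)"
  by (subst mult_four_block_mat[OF a _ _ X b _ _ Y]) (use a b X Y in auto)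

lemma block_diag_transpose:
  fixes a X :: "real mat"
  assumes "a \<in> carrier_mat 1 1" "X \<in> carrier_mat m m"
  shows "(four_block_mat a (0\<^sub>m 1 m) (0\<^sub>m m 1) X)\<^sup>T = four_block_mat a\<^sup>T (0\<^sub>m 1 m) (0\<^sub>m m 1) X\<^sup>T"
  using assms by (subst transpose_four_block_mat) auto

theorem real_symmetric_mat_orthogonally_diagonalizable:
  fixes A :: "real mat"
  assumes "A \<in> carrier_mat n n" "A\<^sup>T = A"
  shows "\<exists>P D. P \<in> carrier_mat n n \<and> D \<in> carrier_mat n n \<and> diagonal_mat D \<and>
     P\<^sup>T * P = 1\<^sub>m n \<and> A = P * D * P\<^sup>T"
  using assms
proof (induction n arbitrary: A)
  case 0
  then show ?case by (intro exI[of _ "1\<^sub>m 0"]) (auto simp: diagonal_mat_def intro!: eq_matI)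
next
  case (Suc m)
  let ?n = "Suc m"
  let ?blk = "\<lambda>a X. four_block_mat a (0\<^sub>m 1 m) (0\<^sub>m m 1) X"
  obtain e where "eigenvalue A e" using real_symmetric_mat_has_eigenvalue Suc.prems by blast
  then obtain W A3 where W: "W \<in> carrier_mat ?n ?n" and WW: "W\<^sup>T * W = 1\<^sub>m ?n"
    and A3: "A3 \<in> carrier_mat m m" "A3\<^sup>T = A3" and WAW: "W\<^sup>T * A * W = ?blk (mat 1 1 (\<lambda>_. e)) A3"
    using orthogonal_deflation Suc.prems by metis
  obtain P3 D3 where P3: "P3 \<in> carrier_mat m m" and D3: "D3 \<in> carrier_mat m m"
    and dD3: "diagonal_mat D3" and PP3: "P3\<^sup>T * P3 = 1\<^sub>m m" and A3eq: "A3 = P3 * D3 * P3\<^sup>T"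
    using Suc.IH[OF A3] by blast
  define B where "B = ?blk (1\<^sub>m 1) P3"
  define D where "D = ?blk (mat 1 1 (\<lambda>_. e)) D3"
  define P where "P = W * B"
  have B: "B \<in> carrier_mat ?n ?n" and D: "D \<in> carrier_mat ?n ?n"
    unfolding B_def D_def using P3 D3 by auto
  have BT: "B\<^sup>T = ?blk (1\<^sub>m 1) P3\<^sup>T" unfolding B_def using block_diag_transpose[of "1\<^sub>m 1" P3] P3 by simp
  have BB: "B\<^sup>T * B = 1\<^sub>m ?n" unfolding BT unfolding B_def by (subst block_diag_mult) (use P3 PP3 in auto)
  have "B * D = ?blk (mat 1 1 (\<lambda>_. e)) (P3 * D3)"
    unfolding B_def D_def by (subst block_diag_mult) (use P3 D3 in auto)
  also have "\<dots> * B\<^sup>T = ?blk (mat 1 1 (\<lambda>_. e)) (P3 * D3 * P3\<^sup>T)"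
    unfolding BT by (subst block_diag_mult) (use P3 D3 in auto)
  finally have BDB: "B * D * B\<^sup>T = W\<^sup>T * A * W" unfolding WAW A3eq .
  have P: "P \<in> carrier_mat ?n ?n" unfolding P_def using W B by simp
  have "P\<^sup>T * P = B\<^sup>T * (W\<^sup>T * W) * B" unfolding P_def using W B
    by (simp add: transpose_mult[OF W B] assoc_mult_mat[of _ ?n ?n _ ?n _ ?n])
  then have PP: "P\<^sup>T * P = 1\<^sub>m ?n" using WW BB B by simp
  have WW': "W * W\<^sup>T = 1\<^sub>m ?n" using mat_mult_left_right_inverse[of "W\<^sup>T" ?n W] W WW by simp
  have "P * D * P\<^sup>T = W * (B * D * B\<^sup>T) * W\<^sup>T" unfolding P_def using W B D
    by (simp add: transpose_mult[OF W B] assoc_mult_mat[of _ ?n ?n _ ?n _ ?n])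
  also have "\<dots> = (W * W\<^sup>T) * A * (W * W\<^sup>T)" unfolding BDB using W Suc.prems(1)
    by (simp add: assoc_mult_mat[of _ ?n ?n _ ?n _ ?n])
  finally have "A = P * D * P\<^sup>T" using WW' Suc.prems(1) by simp
  moreover have "diagonal_mat D" using dD3 D3 unfolding D_def by (auto simp: diagonal_mat_def)
  ultimately show ?case using P D PP by blast
qed

section \<open>Eigenvalues of symmetric matrices indexed by a finite set\<close>

lemma charpoly_eq_char_poly_mat:
  fixes M :: "'a \<Rightarrow> 'a \<Rightarrow> real"
  assumes f: "bij_betw f {0..<n} S"
  shows "charpoly S M = char_poly (mat n n (\<lambda>(i, j). M (f i) (f j)))"
proof -
  let ?A = "mat n n (\<lambda>(i, j). M (f i) (f j))"
  let ?F = "\<lambda>v w. [: - M v w, (if w = v then 1 else 0) :]"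
  let ?mp = "map_permutation {0..<n} f"
  have inj: "inj_on f {0..<n}" using f by (auto simp: bij_betw_def)
  define g where "g = inv_into {0..<n} f"
  have g: "bij_betw g S {0..<n}" unfolding g_def by (rule bij_betw_inv_into[OF f])
  have gf: "g (f i) = i" if "i \<in> {0..<n}" for i unfolding g_def using inj that by simp
  have fg: "f (g s) = s" if "s \<in> S" for s unfolding g_def using f that by (simp add: bij_betw_inv_into_right)
  have bij: "bij_betw ?mp {p. p permutes {0..<n}} {\<sigma>. \<sigma> permutes S}"
    by (rule bij_betw_byWitness[where f' = "map_permutation S g"])
      (use map_permutation_compose_inv[OF f _ gf] map_permutation_compose_inv[OF g _ fg]
         map_permutation_permutes[OF f] map_permutation_permutes[OF g] in auto)
  have "charpoly S M = (\<Sum>p | p permutes {0..<n}. of_int (sign (?mp p)) * (\<Prod>v\<in>S. ?F v (?mp p v)))"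
    unfolding charpoly_def by (rule sum.reindex_bij_betw[OF bij, symmetric])
  also have "\<dots> = (\<Sum>p | p permutes {0..<n}. of_int (sign p) * (\<Prod>i\<in>{0..<n}. char_poly_matrix ?A $$ (i, p i)))"
  proof (rule sum.cong[OF refl])
    fix p assume p: "p \<in> {p. p permutes {0..<n}}"
    have "(\<Prod>v\<in>S. ?F v (?mp p v)) = (\<Prod>i\<in>{0..<n}. ?F (f i) (?mp p (f i)))"
      by (rule prod.reindex_bij_betw[OF f, symmetric])
    also have "\<dots> = (\<Prod>i\<in>{0..<n}. char_poly_matrix ?A $$ (i, p i))"
    proof (rule prod.cong[OF refl])
      fix i assume i: "i \<in> {0..<n}"
      have pi: "p i \<in> {0..<n}" using p i by (simp add: permutes_in_image)
      have "(f (p i) = f i) = (p i = i)" using inj i pi by (auto simp: inj_on_def)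
      then show "?F (f i) (?mp p (f i)) = char_poly_matrix ?A $$ (i, p i)"
        using i pi map_permutation_apply[OF inj i] by (auto simp: char_poly_matrix_def)
    qed
    finally show "of_int (sign (?mp p)) * (\<Prod>v\<in>S. ?F v (?mp p v)) =
      of_int (sign p) * (\<Prod>i\<in>{0..<n}. char_poly_matrix ?A $$ (i, p i))"
      using sign_map_permutation[OF inj] p by simp
  qed
  also have "\<dots> = char_poly ?A"
    unfolding char_poly_def det_def by (simp add: char_poly_matrix_def)
  finally show ?thesis .
qed

lemma proots_linear_factors: "proots (\<Prod>x\<leftarrow>xs. [:- x, 1:]) = mset (xs :: 'a :: idom list)"
proof (induction xs)
  case (Cons a xs)
  have "(\<Prod>x\<leftarrow>xs. [:- x, 1:]) \<noteq> (0 :: 'a poly)" by (auto simp: prod_list_zero_iff)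
  with Cons show ?case by (simp add: proots_mult del: mult_pCons_left)
qed simp

lemma eigenvalues_eqI:
  assumes "sorted xs" and "charpoly S M = (\<Prod>x\<leftarrow>xs. [:- x, 1:])"
  shows "eigenvalues S M = xs"
  unfolding eigenvalues_def
proof (rule the_equality)
  fix ys assume ys: "sorted ys \<and> charpoly S M = (\<Prod>x\<leftarrow>ys. [:- x, 1:])"
  then have "mset ys = mset xs" using assms(2) by (metis proots_linear_factors)
  then show "ys = xs" using ys assms(1) by (metis properties_for_sort sorted_sort_id)
qed (use assms in simp)

definition inner_on :: "'a set \<Rightarrow> ('a \<Rightarrow> real) \<Rightarrow> ('a \<Rightarrow> real) \<Rightarrow> real" where
  "inner_on S x y = (\<Sum>s\<in>S. x s * y s)"

definition orthonormal_on :: "'a set \<Rightarrow> 'i set \<Rightarrow> ('i \<Rightarrow> 'a \<Rightarrow> real) \<Rightarrow> bool" where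
  "orthonormal_on S I v \<longleftrightarrow> (\<forall>i\<in>I. \<forall>j\<in>I. inner_on S (v i) (v j) = (if i = j then 1 else 0))"

definition eigenbasis :: "'a set \<Rightarrow> ('a \<Rightarrow> 'a \<Rightarrow> real) \<Rightarrow> (nat \<Rightarrow> 'a \<Rightarrow> real) \<Rightarrow> bool" where
  "eigenbasis S M v \<longleftrightarrow> orthonormal_on S {..<card S} v \<and>
     (\<forall>i<card S. \<forall>a\<in>S. (\<Sum>b\<in>S. M a b * v i b) = eigenvalues S M ! i * v i a)"

lemma symmetric_eigenvectors:
  fixes M :: "'a \<Rightarrow> 'a \<Rightarrow> real"
  assumes fin: "finite S" and sym: "\<And>a b. a \<in> S \<Longrightarrow> b \<in> S \<Longrightarrow> M a b = M b a"
  obtains es v where "length es = card S" "charpoly S M = (\<Prod>x\<leftarrow>es. [:- x, 1:])"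
    "orthonormal_on S {..<card S} v"
    "\<And>i a. i < card S \<Longrightarrow> a \<in> S \<Longrightarrow> (\<Sum>b\<in>S. M a b * v i b) = es ! i * v i a"
proof -
  define n where "n = card S"
  obtain f where f: "bij_betw f {0..<n} S" using ex_bij_betw_nat_finite[OF fin] unfolding n_def by blast
  define g where "g = inv_into {0..<n} f"
  have gf: "g (f i) = i" if "i < n" for i unfolding g_def using f that by (simp add: bij_betw_def)
  have fg: "f (g s) = s" if "s \<in> S" for s unfolding g_def using f that by (simp add: bij_betw_inv_into_right)
  have gS: "g s < n" if "s \<in> S" for s using bij_betw_inv_into[OF f] that by (auto simp: g_def bij_betw_def)
  have sum_S: "(\<Sum>s\<in>S. h s) = (\<Sum>k<n. h (f k))" for h :: "'a \<Rightarrow> real"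
    using sum.reindex_bij_betw[OF f, of h] by (simp add: lessThan_atLeast0)
  define A where "A = mat n n (\<lambda>(i, j). M (f i) (f j))"
  have A: "A \<in> carrier_mat n n" unfolding A_def by simp
  have "A\<^sup>T = A" unfolding A_def using f by (intro eq_matI) (auto simp: sym bij_betwE)
  then obtain P D where P: "P \<in> carrier_mat n n" and D: "D \<in> carrier_mat n n" and dD: "diagonal_mat D"
    and PP: "P\<^sup>T * P = 1\<^sub>m n" and AP: "A = P * D * P\<^sup>T"
    using real_symmetric_mat_orthogonally_diagonalizable[OF A] by blast
  have PP': "P * P\<^sup>T = 1\<^sub>m n" using mat_mult_left_right_inverse[of "P\<^sup>T" n P] P PP by simp
  have sim: "similar_mat A D"
    by (rule similar_matI[where n = n and P = P and Q = "P\<^sup>T"])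
      (use A D P PP PP' AP in \<open>auto simp: assoc_mult_mat\<close>)
  have ut: "upper_triangular D" using dD D unfolding diagonal_mat_def upper_triangular_def by auto
  have cp: "charpoly S M = (\<Prod>x\<leftarrow>diag_mat D. [:- x, 1:])"
    unfolding charpoly_eq_char_poly_mat[OF f] A_def[symmetric] char_poly_similar[OF sim]
    by (rule char_poly_upper_triangular[OF D ut])
  define v where "v = (\<lambda>i s. P $$ (g s, i))"
  have "orthonormal_on S {..<n} v"
    unfolding orthonormal_on_def inner_on_def
  proof (intro ballI)
    fix i j assume "i \<in> {..<n}" "j \<in> {..<n}"
    then have "(\<Sum>s\<in>S. v i s * v j s) = (P\<^sup>T * P) $$ (i, j)"
      unfolding sum_S v_def using P by (simp add: gf index_mult_mat scalar_prod_def lessThan_atLeast0)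
    then show "(\<Sum>s\<in>S. v i s * v j s) = (if i = j then 1 else 0)" using PP \<open>i \<in> _\<close> \<open>j \<in> _\<close> by simp
  qed
  moreover have "(\<Sum>b\<in>S. M a b * v i b) = diag_mat D ! i * v i a" if i: "i < n" and a: "a \<in> S" for i a
  proof -
    have AP': "A * P = P * D" unfolding AP using P D PP
      by (simp add: assoc_mult_mat[of _ n n _ n _ n])
    have "(\<Sum>b\<in>S. M a b * v i b) = (A * P) $$ (g a, i)"
      unfolding sum_S v_def A_def using A P gS[OF a] i
      by (simp add: gf fg[OF a] index_mult_mat scalar_prod_def lessThan_atLeast0)
    also have "\<dots> = (\<Sum>k<n. P $$ (g a, k) * D $$ (k, i))"
      unfolding AP' using P D gS[OF a] i by (simp add: index_mult_mat scalar_prod_def lessThan_atLeast0)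
    also have "\<dots> = P $$ (g a, i) * D $$ (i, i)"
      using dD D i by (subst sum.remove[of _ i]) (auto simp: diagonal_mat_def intro!: sum.neutral)
    finally show ?thesis unfolding v_def diag_mat_def using D i by simp
  qed
  moreover have "length (diag_mat D) = n" using D by (simp add: diag_mat_def)
  ultimately show ?thesis using that cp unfolding n_def by blast
qed

lemma symmetric_eigenbasis:
  fixes M :: "'a \<Rightarrow> 'a \<Rightarrow> real"
  assumes "finite S" and "\<And>a b. a \<in> S \<Longrightarrow> b \<in> S \<Longrightarrow> M a b = M b a"
  shows "length (eigenvalues S M) = card S" and "sorted (eigenvalues S M)" and "\<exists>v. eigenbasis S M v"
proof -
  obtain es v where len: "length es = card S" and cp: "charpoly S M = (\<Prod>x\<leftarrow>es. [:- x, 1:])"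
    and orth: "orthonormal_on S {..<card S} v"
    and eig: "\<And>i a. i < card S \<Longrightarrow> a \<in> S \<Longrightarrow> (\<Sum>b\<in>S. M a b * v i b) = es ! i * v i a"
    using symmetric_eigenvectors[of S M, OF assms] by blast
  have "(\<Prod>x\<leftarrow>sort es. [:- x, 1:]) = (\<Prod>x\<leftarrow>es. [:- x, 1:])"
    by (simp add: prod_mset_prod_list[symmetric])
  then have ev: "eigenvalues S M = sort es" by (intro eigenvalues_eqI) (simp_all add: cp)
  then show "length (eigenvalues S M) = card S" and "sorted (eigenvalues S M)" using len by simp_all
  obtain p where p: "p permutes {..<card S}" and pl: "permute_list p es = sort es"
    using mset_eq_permutation[of "sort es" es] len by auto
  have p_less: "p i < card S" if "i < card S" for i using permutes_in_image[OF p, of i] that by simp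
  have "eigenbasis S M (\<lambda>i. v (p i))"
    unfolding eigenbasis_def
  proof (intro conjI allI impI ballI)
    show "orthonormal_on S {..<card S} (\<lambda>i. v (p i))"
      unfolding orthonormal_on_def
    proof (intro ballI)
      fix i j assume "i \<in> {..<card S}" "j \<in> {..<card S}"
      then show "inner_on S (v (p i)) (v (p j)) = (if i = j then 1 else 0)"
        using orth p_less permutes_inj[OF p] unfolding orthonormal_on_def by (simp add: inj_eq)
    qed
    fix i a assume i: "i < card S" and a: "a \<in> S"
    have "eigenvalues S M ! i = es ! p i"
      unfolding ev pl[symmetric] using permute_list_nth[of p es i] p i len by simp
    then show "(\<Sum>b\<in>S. M a b * v (p i) b) = eigenvalues S M ! i * v (p i) a"
      using eig[OF p_less[OF i] a] by simp
  qed
  then show "\<exists>v. eigenbasis S M v" by blast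
qed

lemma eigenvalues_singleton:
  fixes M :: "'a \<Rightarrow> 'a \<Rightarrow> real"
  shows "eigenvalues {a} M ! 0 = M a a"
proof -
  obtain v where v: "eigenbasis {a} M v" using symmetric_eigenbasis(3)[of "{a}" M] by auto
  then have "v 0 a * v 0 a = 1" and "M a a * v 0 a = eigenvalues {a} M ! 0 * v 0 a"
    by (auto simp: eigenbasis_def orthonormal_on_def inner_on_def)
  then show ?thesis by (metis mult_cancel_right mult_zero_left zero_neq_one)
qed

section \<open>Min-max bounds for eigenvalues\<close>

definition quad_form :: "'a set \<Rightarrow> ('a \<Rightarrow> 'a \<Rightarrow> real) \<Rightarrow> ('a \<Rightarrow> real) \<Rightarrow> real" where
  "quad_form S M x = (\<Sum>a\<in>S. \<Sum>b\<in>S. x a * M a b * x b)"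

definition lincomb :: "'i set \<Rightarrow> ('i \<Rightarrow> real) \<Rightarrow> ('i \<Rightarrow> 'a \<Rightarrow> real) \<Rightarrow> 'a \<Rightarrow> real" where
  "lincomb I c v = (\<lambda>s. \<Sum>i\<in>I. c i * v i s)"

lemma homogeneous_system_nontrivial_solution:
  fixes w :: "'k \<Rightarrow> 'z \<Rightarrow> real"
  assumes "finite Z" and "finite K" and "card Z < card K"
  shows "\<exists>c. (\<exists>k\<in>K. c k \<noteq> 0) \<and> (\<forall>z\<in>Z. lincomb K c w z = 0)"
  using assms
proof (induction Z arbitrary: K w rule: finite_induct)
  case empty
  then obtain k where "k \<in> K" by fastforce
  then show ?case by (intro exI[of _ "\<lambda>_. 1"]) auto
next
  case (insert z Z)
  show ?case
  proof (cases "\<forall>k\<in>K. w k z = 0")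
    case True
    have "card Z < card K" using insert by simp
    with insert.IH[of K w] insert.prems(1) obtain c where "\<exists>k\<in>K. c k \<noteq> 0" "\<forall>z\<in>Z. lincomb K c w z = 0"
      by blast
    then show ?thesis using True by (intro exI[of _ c]) (auto simp: lincomb_def)
  next
    case False
    then obtain k0 where k0: "k0 \<in> K" "w k0 z \<noteq> 0" by blast
    txt \<open>Eliminate the unknown \<open>k0\<close> using the equation \<open>z\<close>.\<close>
    define K' where "K' = K - {k0}"
    define w' where "w' = (\<lambda>k z'. w k z' - (w k z / w k0 z) * w k0 z')"
    have "finite K'" "card Z < card K'" unfolding K'_def using insert k0 by auto
    from insert.IH[OF this] obtain c' where c': "\<exists>k\<in>K'. c' k \<noteq> 0"
      "\<forall>z'\<in>Z. lincomb K' c' w' z' = 0" by blast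
    define c where "c = (\<lambda>k. if k = k0 then - lincomb K' c' w z / w k0 z else c' k)"
    have lc: "lincomb K c w z' = c k0 * w k0 z' + lincomb K' c' w z'" for z'
    proof -
      have "lincomb K c w z' = c k0 * w k0 z' + lincomb K' c w z'"
        unfolding K'_def lincomb_def using k0 insert.prems(1) by (simp add: sum.remove)
      also have "lincomb K' c w z' = lincomb K' c' w z'"
        unfolding lincomb_def by (rule sum.cong) (auto simp: c_def K'_def)
      finally show ?thesis .
    qed
    have "lincomb K c w z' = 0" if "z' \<in> insert z Z" for z'
    proof (cases "z' = z")
      case True
      then show ?thesis unfolding lc using k0 by (simp add: c_def)
    next
      case False
      then have "z' \<in> Z" using that by simp
      have "lincomb K' c' w' z' = lincomb K' c' w z' - lincomb K' c' w z / w k0 z * w k0 z'"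
        unfolding w'_def lincomb_def
        by (simp add: algebra_simps sum_subtractf sum_distrib_left sum_divide_distrib sum_distrib_right)
      then show ?thesis unfolding lc using c'(2) \<open>z' \<in> Z\<close> by (simp add: c_def)
    qed
    moreover have "\<exists>k\<in>K. c k \<noteq> 0" using c'(1) unfolding c_def K'_def by auto
    ultimately show ?thesis by blast
  qed
qed

lemma inner_on_cong: "(\<And>s. s \<in> S \<Longrightarrow> x s = y s) \<Longrightarrow> inner_on S x x = inner_on S y y"
  unfolding inner_on_def by (rule sum.cong) auto

lemma quad_form_cong: "(\<And>s. s \<in> S \<Longrightarrow> x s = y s) \<Longrightarrow> quad_form S M x = quad_form S M y"
  unfolding quad_form_def by (intro sum.cong) auto

lemma inner_on_self_pos:
  assumes "finite S" "s \<in> S" "x s \<noteq> 0"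
  shows "inner_on S x x > 0"
proof -
  have "x s * x s \<le> inner_on S x x" unfolding inner_on_def
    by (rule member_le_sum) (use assms in auto)
  moreover have "x s * x s > 0" using assms(3) not_real_square_gt_zero by blast
  ultimately show ?thesis by linarith
qed

lemma inner_on_lincomb_orthonormal:
  assumes "orthonormal_on S I v" "finite I" "k \<in> I"
  shows "inner_on S (v k) (lincomb I c v) = c k"
proof -
  have "inner_on S (v k) (lincomb I c v) = (\<Sum>i\<in>I. c i * inner_on S (v k) (v i))"
    unfolding inner_on_def lincomb_def by (simp add: sum_distrib_left sum.swap[of _ S] algebra_simps)
  also have "\<dots> = (\<Sum>i\<in>I. if i = k then c i else 0)"
    by (rule sum.cong) (use assms in \<open>auto simp: orthonormal_on_def\<close>)
  finally show ?thesis using assms by simp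
qed

lemma lincomb_orthonormal_eq_0:
  assumes "orthonormal_on S I v" "finite I" "\<forall>s\<in>S. lincomb I c v s = 0" "k \<in> I"
  shows "c k = 0"
  using inner_on_lincomb_orthonormal[OF assms(1,2,4), of c] assms(3) by (simp add: inner_on_def)

lemma inner_on_lincomb_self:
  assumes "orthonormal_on S I v" "finite I"
  shows "inner_on S (lincomb I c v) (lincomb I c v) = (\<Sum>i\<in>I. (c i)\<^sup>2)"
proof -
  have "inner_on S (lincomb I c v) (lincomb I c v) = (\<Sum>i\<in>I. c i * inner_on S (v i) (lincomb I c v))"
    unfolding inner_on_def lincomb_def
    by (simp add: sum_distrib_left sum_distrib_right sum.swap[of _ S] algebra_simps)
  then show ?thesis using assms by (simp add: inner_on_lincomb_orthonormal power2_eq_square)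
qed

lemma quad_form_lincomb_eigenvectors:
  assumes "orthonormal_on S I v" "finite I"
    and eig: "\<And>i a. i \<in> I \<Longrightarrow> a \<in> S \<Longrightarrow> (\<Sum>b\<in>S. M a b * v i b) = \<mu> i * v i a"
  shows "quad_form S M (lincomb I c v) = (\<Sum>i\<in>I. (c i)\<^sup>2 * \<mu> i)"
proof -
  let ?y = "lincomb I c v"
  have My: "(\<Sum>b\<in>S. M a b * ?y b) = (\<Sum>i\<in>I. c i * \<mu> i * v i a)" if "a \<in> S" for a
  proof -
    have "(\<Sum>b\<in>S. M a b * ?y b) = (\<Sum>i\<in>I. c i * (\<Sum>b\<in>S. M a b * v i b))"
      unfolding lincomb_def by (simp add: sum_distrib_left sum.swap[of _ S] algebra_simps)
    also have "\<dots> = (\<Sum>i\<in>I. c i * \<mu> i * v i a)" by (rule sum.cong) (use eig that in auto)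
    finally show ?thesis .
  qed
  have "quad_form S M ?y = (\<Sum>a\<in>S. ?y a * (\<Sum>b\<in>S. M a b * ?y b))"
    unfolding quad_form_def by (simp add: sum_distrib_left algebra_simps)
  also have "\<dots> = (\<Sum>a\<in>S. ?y a * (\<Sum>i\<in>I. c i * \<mu> i * v i a))" by (rule sum.cong) (simp_all add: My)
  also have "\<dots> = (\<Sum>i\<in>I. c i * \<mu> i * inner_on S (v i) ?y)"
    unfolding inner_on_def by (simp add: sum_distrib_left sum.swap[of _ S] algebra_simps)
  finally show ?thesis using assms by (simp add: inner_on_lincomb_orthonormal power2_eq_square mult_ac)
qed

lemma quad_form_matrix_cong:
  "(\<And>a b. a \<in> S \<Longrightarrow> b \<in> S \<Longrightarrow> M a b = M' a b) \<Longrightarrow> quad_form S M x = quad_form S M' x"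
  unfolding quad_form_def by (intro sum.cong) auto

lemma quad_form_add_diagonal:
  assumes "finite S"
  shows "quad_form S (\<lambda>a b. M a b + (if a = b then d a else 0)) x = quad_form S M x + (\<Sum>a\<in>S. d a * (x a)\<^sup>2)"
proof -
  have "(\<Sum>b\<in>S. x a * (M a b + (if a = b then d a else 0)) * x b) =
      (\<Sum>b\<in>S. x a * M a b * x b) + d a * (x a)\<^sup>2" if "a \<in> S" for a
  proof -
    have "(\<Sum>b\<in>S. x a * (M a b + (if a = b then d a else 0)) * x b) =
        (\<Sum>b\<in>S. x a * M a b * x b) + (\<Sum>b\<in>S. if a = b then x a * d a * x b else 0)"
      unfolding sum.distrib[symmetric] by (rule sum.cong) (auto simp: algebra_simps)
    then show ?thesis using assms that by (simp add: power2_eq_square algebra_simps)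
  qed
  then show ?thesis unfolding quad_form_def by (simp add: sum.distrib)
qed

lemma sum_weighted_squares_mono:
  fixes f g x :: "'a \<Rightarrow> real"
  assumes "\<And>a. a \<in> S \<Longrightarrow> x a \<noteq> 0 \<Longrightarrow> f a \<le> g a"
  shows "(\<Sum>a\<in>S. f a * (x a)\<^sup>2) \<le> (\<Sum>a\<in>S. g a * (x a)\<^sup>2)"
proof (rule sum_mono)
  fix a assume a: "a \<in> S"
  show "f a * (x a)\<^sup>2 \<le> g a * (x a)\<^sup>2"
  proof (cases "x a = 0")
    case False
    then show ?thesis using assms[OF a] by (simp add: mult_right_mono)
  qed simp
qed

lemma orthonormal_on_subset: "orthonormal_on S K v \<Longrightarrow> I \<subseteq> K \<Longrightarrow> orthonormal_on S I v"
  unfolding orthonormal_on_def by blast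

lemma eigenbasis_quad_form_ge:
  assumes fin: "finite S" and sym: "\<And>a b. a \<in> S \<Longrightarrow> b \<in> S \<Longrightarrow> M a b = M b a"
    and v: "eigenbasis S M v" and I: "I \<subseteq> {j..<card S}"
  shows "eigenvalues S M ! j * inner_on S (lincomb I c v) (lincomb I c v) \<le> quad_form S M (lincomb I c v)"
proof -
  let ?ev = "eigenvalues S M"
  have finI: "finite I" using I finite_subset by blast
  have "I \<subseteq> {..<card S}" using I by (auto simp: subset_iff)
  then have orth: "orthonormal_on S I v" using v orthonormal_on_subset unfolding eigenbasis_def by blast
  have eig: "\<And>i a. i \<in> I \<Longrightarrow> a \<in> S \<Longrightarrow> (\<Sum>b\<in>S. M a b * v i b) = ?ev ! i * v i a"
    using v I unfolding eigenbasis_def by auto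
  have len: "length ?ev = card S" and sorted: "sorted ?ev"
    using symmetric_eigenbasis(1,2)[of S M, OF fin sym] by auto
  have "?ev ! j * (c i)\<^sup>2 \<le> (c i)\<^sup>2 * ?ev ! i" if "i \<in> I" for i
  proof -
    have "j \<le> i" "i < length ?ev" using I that len by auto
    then show ?thesis using sorted_nth_mono[OF sorted] by (metis mult.commute mult_right_mono zero_le_power2)
  qed
  then have "?ev ! j * (\<Sum>i\<in>I. (c i)\<^sup>2) \<le> (\<Sum>i\<in>I. (c i)\<^sup>2 * ?ev ! i)"
    unfolding sum_distrib_left by (rule sum_mono)
  then show ?thesis
    using quad_form_lincomb_eigenvectors[OF orth finI eig] by (simp add: inner_on_lincomb_self[OF orth finI])
qed

lemma eigenbasis_quad_form_le:
  assumes fin: "finite S" and sym: "\<And>a b. a \<in> S \<Longrightarrow> b \<in> S \<Longrightarrow> M a b = M b a"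
    and v: "eigenbasis S M v" and I: "I \<subseteq> {..j}" and j: "j < card S"
  shows "quad_form S M (lincomb I c v) \<le> eigenvalues S M ! j * inner_on S (lincomb I c v) (lincomb I c v)"
proof -
  let ?ev = "eigenvalues S M"
  have finI: "finite I" using I finite_subset by blast
  have "I \<subseteq> {..<card S}" using I j by (auto simp: subset_iff)
  then have orth: "orthonormal_on S I v" using v orthonormal_on_subset unfolding eigenbasis_def by blast
  have eig: "\<And>i a. i \<in> I \<Longrightarrow> a \<in> S \<Longrightarrow> (\<Sum>b\<in>S. M a b * v i b) = ?ev ! i * v i a"
    using v I j unfolding eigenbasis_def by auto
  have len: "length ?ev = card S" and sorted: "sorted ?ev"
    using symmetric_eigenbasis(1,2)[of S M, OF fin sym] by auto
  have "(c i)\<^sup>2 * ?ev ! i \<le> ?ev ! j * (c i)\<^sup>2" if "i \<in> I" for i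
  proof -
    have "i \<le> j" "j < length ?ev" using I that j len by auto
    then show ?thesis using sorted_nth_mono[OF sorted] by (metis mult.commute mult_right_mono zero_le_power2)
  qed
  then have "(\<Sum>i\<in>I. (c i)\<^sup>2 * ?ev ! i) \<le> ?ev ! j * (\<Sum>i\<in>I. (c i)\<^sup>2)"
    unfolding sum_distrib_left by (rule sum_mono)
  then show ?thesis
    using quad_form_lincomb_eigenvectors[OF orth finI eig] by (simp add: inner_on_lincomb_self[OF orth finI])
qed

lemma exists_lincomb_in_span:
  fixes v :: "'i \<Rightarrow> 'a \<Rightarrow> real" and u :: "'j \<Rightarrow> 'a \<Rightarrow> real"
  assumes fin: "finite S" "finite I" "finite J" "finite Z"
    and orth: "orthonormal_on S I v"
    and indep: "\<And>\<beta>. \<forall>s\<in>S. lincomb J \<beta> u s = 0 \<Longrightarrow> \<forall>i\<in>J. \<beta> i = 0"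
    and card: "card S + card Z < card I + card J"
  shows "\<exists>\<alpha> \<beta>. (\<forall>s\<in>S. lincomb J \<beta> u s = lincomb I \<alpha> v s) \<and> (\<forall>z\<in>Z. lincomb J \<beta> u z = 0) \<and>
    (\<exists>s\<in>S. lincomb J \<beta> u s \<noteq> 0)"
proof -
  txt \<open>Unknowns \<open>\<alpha>, \<beta>\<close>; one equation per point of \<open>S\<close> and one per point of \<open>Z\<close>.\<close>
  define w :: "'i + 'j \<Rightarrow> 'a + 'a \<Rightarrow> real" where
    "w = case_sum (\<lambda>i. case_sum (v i) (\<lambda>_. 0)) (\<lambda>j. case_sum (\<lambda>s. - u j s) (u j))"
  have "finite (S <+> Z)" "finite (I <+> J)" "card (S <+> Z) < card (I <+> J)"
    using fin card by (simp_all add: card_Plus)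
  then obtain c where nz: "\<exists>k\<in>I <+> J. c k \<noteq> 0" and sol: "\<forall>e\<in>S <+> Z. lincomb (I <+> J) c w e = 0"
    using homogeneous_system_nontrivial_solution[of "S <+> Z" "I <+> J" w] by blast
  define \<alpha> where "\<alpha> = (\<lambda>i. c (Inl i))"
  define \<beta> where "\<beta> = (\<lambda>j. c (Inr j))"
  have split: "lincomb (I <+> J) c w e = lincomb I \<alpha> (\<lambda>i. w (Inl i)) e + lincomb J \<beta> (\<lambda>j. w (Inr j)) e" for e
    unfolding lincomb_def \<alpha>_def \<beta>_def using fin by (simp add: sum.Plus)
  have eqS: "lincomb J \<beta> u s = lincomb I \<alpha> v s" if "s \<in> S" for s
    using sol that split[of "Inl s"] by (force simp: w_def lincomb_def sum_negf)
  have eqZ: "lincomb J \<beta> u z = 0" if "z \<in> Z" for z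
    using sol that split[of "Inr z"] by (force simp: w_def lincomb_def)
  have "\<exists>s\<in>S. lincomb J \<beta> u s \<noteq> 0"
  proof (rule ccontr)
    assume "\<not> ?thesis"
    then have x0: "\<forall>s\<in>S. lincomb J \<beta> u s = 0" by blast
    then have "\<forall>s\<in>S. lincomb I \<alpha> v s = 0" using eqS by simp
    then have "\<forall>i\<in>I. \<alpha> i = 0" using lincomb_orthonormal_eq_0[OF orth fin(2)] by blast
    moreover have "\<forall>j\<in>J. \<beta> j = 0" using indep x0 by blast
    ultimately show False using nz by (auto simp: \<alpha>_def \<beta>_def)
  qed
  then show ?thesis using eqS eqZ by blast
qed

lemma eigenvalue_le_of_test_family:
  fixes M :: "'a \<Rightarrow> 'a \<Rightarrow> real" and u :: "'j \<Rightarrow> 'a \<Rightarrow> real"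
  assumes fin: "finite S" and sym: "\<And>a b. a \<in> S \<Longrightarrow> b \<in> S \<Longrightarrow> M a b = M b a"
    and j: "1 \<le> j" "j \<le> card S" and finJ: "finite J" and finZ: "finite Z"
    and indep: "\<And>\<beta>. \<forall>s\<in>S. lincomb J \<beta> u s = 0 \<Longrightarrow> \<forall>i\<in>J. \<beta> i = 0"
    and card: "card Z + j \<le> card J"
    and bound: "\<And>\<beta>. \<forall>z\<in>Z. lincomb J \<beta> u z = 0 \<Longrightarrow>
       quad_form S M (lincomb J \<beta> u) \<le> c * inner_on S (lincomb J \<beta> u) (lincomb J \<beta> u)"
  shows "eigenvalues S M ! (j - 1) \<le> c"
proof -
  obtain v where v: "eigenbasis S M v" using symmetric_eigenbasis(3)[of S M, OF fin sym] by blast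
  define I where "I = {j - 1..<card S}"
  have "I \<subseteq> {..<card S}" by (auto simp: I_def)
  then have orth: "orthonormal_on S I v" using v orthonormal_on_subset unfolding eigenbasis_def by blast
  have finI: "finite I" and card': "card S + card Z < card I + card J" using j card by (simp_all add: I_def)
  obtain \<alpha> \<beta> where eq: "\<forall>s\<in>S. lincomb J \<beta> u s = lincomb I \<alpha> v s"
    and van: "\<forall>z\<in>Z. lincomb J \<beta> u z = 0" and nz: "\<exists>s\<in>S. lincomb J \<beta> u s \<noteq> 0"
    using exists_lincomb_in_span[OF fin finI finJ finZ orth indep card'] by blast
  let ?x = "lincomb J \<beta> u" and ?y = "lincomb I \<alpha> v"
  have "eigenvalues S M ! (j - 1) * inner_on S ?x ?x = eigenvalues S M ! (j - 1) * inner_on S ?y ?y"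
    using inner_on_cong[of S ?x ?y] eq by simp
  also have "\<dots> \<le> quad_form S M ?y" by (rule eigenbasis_quad_form_ge[OF fin sym v]) (auto simp: I_def)
  also have "\<dots> = quad_form S M ?x" using quad_form_cong[of S ?x ?y M] eq by simp
  also have "\<dots> \<le> c * inner_on S ?x ?x" using bound van by blast
  finally have "eigenvalues S M ! (j - 1) * inner_on S ?x ?x \<le> c * inner_on S ?x ?x" .
  moreover have "inner_on S ?x ?x > 0" using nz inner_on_self_pos[OF fin] by blast
  ultimately show ?thesis by simp
qed

lemma eigenvalue_ge_of_test_family:
  fixes M :: "'a \<Rightarrow> 'a \<Rightarrow> real" and u :: "'j \<Rightarrow> 'a \<Rightarrow> real"
  assumes fin: "finite S" and sym: "\<And>a b. a \<in> S \<Longrightarrow> b \<in> S \<Longrightarrow> M a b = M b a"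
    and j: "1 \<le> j" "j \<le> card S" and finJ: "finite J" and finZ: "finite Z"
    and indep: "\<And>\<beta>. \<forall>s\<in>S. lincomb J \<beta> u s = 0 \<Longrightarrow> \<forall>i\<in>J. \<beta> i = 0"
    and card: "card Z + j \<le> card J"
    and bound: "\<And>\<beta>. \<forall>z\<in>Z. lincomb J \<beta> u z = 0 \<Longrightarrow>
       c * inner_on S (lincomb J \<beta> u) (lincomb J \<beta> u) \<le> quad_form S M (lincomb J \<beta> u)"
  shows "c \<le> eigenvalues S M ! (card S - j)"
proof -
  obtain v where v: "eigenbasis S M v" using symmetric_eigenbasis(3)[of S M, OF fin sym] by blast
  define I where "I = {..<card S - j + 1}"
  have "I \<subseteq> {..<card S}" using j by (auto simp: I_def)
  then have orth: "orthonormal_on S I v" using v orthonormal_on_subset unfolding eigenbasis_def by blast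
  have finI: "finite I" and card': "card S + card Z < card I + card J" using j card by (simp_all add: I_def)
  obtain \<alpha> \<beta> where eq: "\<forall>s\<in>S. lincomb J \<beta> u s = lincomb I \<alpha> v s"
    and van: "\<forall>z\<in>Z. lincomb J \<beta> u z = 0" and nz: "\<exists>s\<in>S. lincomb J \<beta> u s \<noteq> 0"
    using exists_lincomb_in_span[OF fin finI finJ finZ orth indep card'] by blast
  let ?x = "lincomb J \<beta> u" and ?y = "lincomb I \<alpha> v"
  have "c * inner_on S ?x ?x \<le> quad_form S M ?x" using bound van by blast
  also have "\<dots> = quad_form S M ?y" using quad_form_cong[of S ?x ?y M] eq by simp
  also have "\<dots> \<le> eigenvalues S M ! (card S - j) * inner_on S ?y ?y"
    by (rule eigenbasis_quad_form_le[OF fin sym v]) (use j in \<open>auto simp: I_def\<close>)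
  also have "\<dots> = eigenvalues S M ! (card S - j) * inner_on S ?x ?x"
    using inner_on_cong[of S ?x ?y] eq by simp
  finally have "c * inner_on S ?x ?x \<le> eigenvalues S M ! (card S - j) * inner_on S ?x ?x" .
  moreover have "inner_on S ?x ?x > 0" using nz inner_on_self_pos[OF fin] by blast
  ultimately show ?thesis by simp
qed

lemma lap_matrix_sym:
  "(\<And>u v. adj u v \<Longrightarrow> adj v u) \<Longrightarrow> lap_matrix S adj a b = lap_matrix S adj b a"
  unfolding lap_matrix_def by (cases "a = b") auto

lemma adj_matrix_sym:
  "(\<And>u v. adj u v \<Longrightarrow> adj v u) \<Longrightarrow> adj_matrix S adj a b = adj_matrix S adj b a"
  unfolding adj_matrix_def by metis

lemma lap_matrix_row_sum:
  assumes "finite S" "a \<in> S"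
  shows "(\<Sum>b\<in>S. lap_matrix S adj a b) = 0"
proof -
  have "(\<Sum>b\<in>S. if adj a b then 1 else 0) = (\<Sum>b\<in>{w \<in> S. adj a w}. 1::real)"
    using sum.inter_filter[OF assms(1), of "\<lambda>_. 1::real" "adj a"] by simp
  then show ?thesis using assms unfolding lap_matrix_def by (simp add: sum_subtractf)
qed

lemma lap_matrix_least_eigenvalue_nonpos:
  assumes fin: "finite S" and ne: "S \<noteq> {}" and sym: "\<And>u v. adj u v \<Longrightarrow> adj v u"
  shows "eigenvalues S (lap_matrix S adj) ! 0 \<le> 0"
proof -
  let ?L = "lap_matrix S adj" and ?one = "\<lambda>_ :: unit. \<lambda>_ :: 'a. 1 :: real"
  have "eigenvalues S ?L ! (1 - 1) \<le> 0"
  proof (rule eigenvalue_le_of_test_family[where J = "{()}" and Z = "{}" and u = ?one])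
    show "1 \<le> card S" using fin ne by (simp add: Suc_le_eq card_gt_0_iff)
    show "\<forall>i\<in>{()}. \<beta> i = 0" if "\<forall>s\<in>S. lincomb {()} \<beta> ?one s = 0" for \<beta>
      using that ne by (auto simp: lincomb_def)
    fix \<beta>
    let ?x = "lincomb {()} \<beta> ?one"
    have "quad_form S ?L ?x = (\<Sum>a\<in>S. \<beta> () * \<beta> () * (\<Sum>b\<in>S. ?L a b))"
      by (simp add: quad_form_def lincomb_def sum_distrib_left algebra_simps)
    then show "quad_form S ?L ?x \<le> 0 * inner_on S ?x ?x" by (simp add: lap_matrix_row_sum[OF fin])
  qed (use fin lap_matrix_sym[of adj] sym in auto)
  then show ?thesis by simp
qed

section \<open>The grid cluster\<close>

lemma card_cluster_vertices: "card (cluster_vertices k) = k * k"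
  by (simp add: cluster_vertices_def card_cartesian_product)

lemma finite_cluster_vertices: "finite (cluster_vertices k)"
  by (simp add: cluster_vertices_def)

lemma grid_adj_sym: "grid_adj c d \<Longrightarrow> grid_adj d c"
  by (auto simp: grid_adj_def)

text \<open>Sides are numbered as in \<open>boundary_cell\<close>: \<open>side_position k c a\<close> is the \<open>t\<close> with
  \<open>c = boundary_cell k a t\<close>, and \<open>grid_step c a\<close> moves from \<open>c\<close> towards side \<open>a\<close>.\<close>

definition on_side :: "nat \<Rightarrow> nat \<times> nat \<Rightarrow> nat \<Rightarrow> bool" where
  "on_side k c a = (if a = 0 then snd c = 0 else if a = 1 then fst c = k - 1
     else if a = 2 then snd c = k - 1 else fst c = 0)"

definition side_position :: "nat \<Rightarrow> nat \<times> nat \<Rightarrow> nat \<Rightarrow> nat" where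
  "side_position k c a = (if a = 0 then fst c else if a = 1 then snd c
     else if a = 2 then k - 1 - fst c else k - 1 - snd c)"

definition grid_step :: "nat \<times> nat \<Rightarrow> nat \<Rightarrow> nat \<times> nat" where
  "grid_step c a = (if a = 0 then (fst c, snd c - 1) else if a = 1 then (fst c + 1, snd c)
     else if a = 2 then (fst c, snd c + 1) else (fst c - 1, snd c))"

definition nsides :: "nat \<Rightarrow> nat \<times> nat \<Rightarrow> nat" where
  "nsides k c = card {a \<in> {0..<4}. on_side k c a}"

lemma less_4_cases: "(a::nat) < 4 \<Longrightarrow> a = 0 \<or> a = 1 \<or> a = 2 \<or> a = 3"
  by auto

lemma on_side_boundary_cell:
  assumes "c \<in> cluster_vertices k" "a < 4" "on_side k c a"
  shows "side_position k c a < k" and "c = boundary_cell k a (side_position k c a)"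
  using assms less_4_cases[OF assms(2)]
  by (cases c; auto simp: cluster_vertices_def boundary_cell_def on_side_def side_position_def)+

lemma boundary_cell_iff_on_side:
  assumes c: "c \<in> cluster_vertices k" and a: "a < 4"
  shows "(\<exists>t<k. c = boundary_cell k a t) \<longleftrightarrow> on_side k c a"
proof
  assume "\<exists>t<k. c = boundary_cell k a t"
  then show "on_side k c a" using c less_4_cases[OF a]
    by (cases c) (auto simp: cluster_vertices_def boundary_cell_def on_side_def)
qed (use on_side_boundary_cell[OF c a] in blast)

lemma side_position_boundary_cell:
  assumes "c \<in> cluster_vertices k" "a < 4" "t < k" "c = boundary_cell k a t"
  shows "side_position k c a = t"
  using assms less_4_cases[OF assms(2)]
  by (cases c) (auto simp: cluster_vertices_def boundary_cell_def side_position_def)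

lemma boundary_cell_in_cluster: "t < k \<Longrightarrow> a < 4 \<Longrightarrow> boundary_cell k a t \<in> cluster_vertices k"
  by (auto simp: cluster_vertices_def boundary_cell_def)

lemma grid_step_in_cluster:
  assumes "c \<in> cluster_vertices k" "a < 4" "\<not> on_side k c a"
  shows "grid_step c a \<in> cluster_vertices k" and "grid_adj c (grid_step c a)"
  using assms less_4_cases[OF assms(2)]
  by (cases c; auto simp: cluster_vertices_def grid_step_def on_side_def grid_adj_def)+

lemma grid_adj_imp_grid_step:
  assumes c: "c \<in> cluster_vertices k" and d: "d \<in> cluster_vertices k" and adj: "grid_adj c d"
  shows "\<exists>a<4. \<not> on_side k c a \<and> d = grid_step c a"
proof -
  obtain x y x' y' where c_eq: "c = (x, y)" and d_eq: "d = (x', y')" by (cases c, cases d)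
  have "x < k" "y < k" "x' < k" "y' < k" using c d c_eq d_eq by (auto simp: cluster_vertices_def)
  then consider "\<not> on_side k c 0 \<and> d = grid_step c 0" | "\<not> on_side k c 1 \<and> d = grid_step c 1"
    | "\<not> on_side k c 2 \<and> d = grid_step c 2" | "\<not> on_side k c 3 \<and> d = grid_step c 3"
    using adj c_eq d_eq by (auto simp: grid_adj_def on_side_def grid_step_def)
  then have "\<exists>a\<in>{0, 1, 2, 3}. \<not> on_side k c a \<and> d = grid_step c a" by cases blast+
  moreover have "{0, 1, 2, 3} \<subseteq> {..<4::nat}" by auto
  ultimately show ?thesis by (meson lessThan_iff subsetD)
qed

lemma grid_step_inj:
  assumes "c \<in> cluster_vertices k" "a < 4" "b < 4"
    and "\<not> on_side k c a" "\<not> on_side k c b" "grid_step c a = grid_step c b"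
  shows "a = b"
  using assms less_4_cases[OF assms(2)] less_4_cases[OF assms(3)]
  by (cases c) (auto simp: cluster_vertices_def grid_step_def on_side_def)

lemma grid_degree:
  assumes c: "c \<in> cluster_vertices k"
  shows "card {d \<in> cluster_vertices k. grid_adj c d} + nsides k c = 4"
proof -
  have nbrs: "{d \<in> cluster_vertices k. grid_adj c d} = grid_step c ` {a \<in> {0..<4}. \<not> on_side k c a}"
    using grid_adj_imp_grid_step[OF c] grid_step_in_cluster[OF c] by fastforce
  have "card {d \<in> cluster_vertices k. grid_adj c d} = card {a \<in> {0..<4}. \<not> on_side k c a}"
    unfolding nbrs by (rule card_image) (use grid_step_inj[OF c] in \<open>auto simp: inj_on_def\<close>)
  moreover have "{a \<in> {0..<4::nat}. \<not> on_side k c a} \<union> {a \<in> {0..<4}. on_side k c a} = {0..<4}" by auto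
  then have "card {a \<in> {0..<4::nat}. \<not> on_side k c a} + card {a \<in> {0..<4}. on_side k c a} = 4"
    by (subst card_Un_disjoint[symmetric]) auto
  ultimately show ?thesis unfolding nsides_def by simp
qed

lemma nsides_eq:
  "nsides k c = (if snd c = 0 then 1 else 0) + (if fst c = k - 1 then 1 else 0)
     + (if snd c = k - 1 then 1 else 0) + (if fst c = 0 then 1 else 0)"
proof -
  have "{0..<4::nat} = {0, 1, 2, 3}" by auto
  then have "nsides k c = (\<Sum>a\<in>{0, 1, 2, 3}. if on_side k c a then 1 else 0)"
    unfolding nsides_def by (simp add: sum.If_cases Int_def)
  then show ?thesis by (simp add: on_side_def)
qed

lemma nsides_bounds:
  assumes "c \<in> cluster_vertices k" "k \<ge> 2"
  shows "nsides k c \<le> 2"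
    and "c \<in> {1..<k-1} \<times> {1..<k-1} \<Longrightarrow> nsides k c = 0"
    and "c \<notin> {(0,0), (0,k-1), (k-1,0), (k-1,k-1)} \<Longrightarrow> nsides k c \<le> 1"
    and "c \<notin> {1..<k-1} \<times> {1..<k-1} \<Longrightarrow> nsides k c \<ge> 1"
    and "c \<in> {(0,0), (0,k-1), (k-1,0), (k-1,k-1)} \<Longrightarrow> nsides k c = 2"
  using assms by (cases c; auto simp: nsides_eq cluster_vertices_def)+

lemma delta_eq:
  assumes k: "k \<ge> 2"
  shows "delta k r = (if r \<le> (k-2)*(k-2) then 0 else if r \<le> k*k - 4 then 1 else 2)"
proof -
  obtain j where kj: "k = j + 2" using k by (metis add.commute le_Suc_ex)
  have "int k ^ 2 - 4 * int k + 4 = int ((k-2)*(k-2))" unfolding kj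
    by (simp add: power2_eq_square algebra_simps)
  moreover have "int k ^ 2 - 4 = int (k*k - 4)" unfolding kj by (simp add: power2_eq_square algebra_simps)
  ultimately show ?thesis by (simp only: delta_def of_nat_le_iff)
qed

lemma card_corner_cells:
  assumes "k \<ge> 2"
  shows "{(0,0), (0,k-1), (k-1,0), (k-1,k-1)} \<subseteq> cluster_vertices k"
    and "card {(0,0), (0,k-1), (k-1,0), (k-1,k-1)} = 4"
  using assms by (auto simp: cluster_vertices_def)

lemma exists_cells_nsides_le_delta:
  assumes k: "k \<ge> 2" and r: "r \<le> k * k"
  shows "\<exists>C \<subseteq> cluster_vertices k. card C = r \<and> (\<forall>c\<in>C. real (nsides k c) \<le> delta k r)"
proof -
  let ?CV = "cluster_vertices k"
  let ?Co = "{(0,0), (0,k-1), (k-1,0), (k-1,k-1)}"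
  have "\<exists>A \<subseteq> ?CV. r \<le> card A \<and> (\<forall>c\<in>A. real (nsides k c) \<le> delta k r)"
  proof (cases "r \<le> (k-2)*(k-2)")
    case True
    have "{1..<k-1} \<times> {1..<k-1} \<subseteq> ?CV" "card ({1..<k-1} \<times> {1..<k-1}) = (k-2)*(k-2)"
      by (auto simp: cluster_vertices_def card_cartesian_product numeral_2_eq_2)
    then show ?thesis using True nsides_bounds(2)[OF _ k] delta_eq[OF k]
      by (intro exI[of _ "{1..<k-1} \<times> {1..<k-1}"]) auto
  next
    case False
    show ?thesis
    proof (cases "r \<le> k*k - 4")
      case True
      have "card (?CV - ?Co) = k*k - 4"
        using card_corner_cells[OF k] by (simp add: card_Diff_subset card_cluster_vertices)
      then show ?thesis using True False nsides_bounds(3)[OF _ k] delta_eq[OF k]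
        by (intro exI[of _ "?CV - ?Co"]) auto
    qed (use r False nsides_bounds(1)[OF _ k] delta_eq[OF k] card_cluster_vertices in auto)
  qed
  then obtain A where "A \<subseteq> ?CV" "r \<le> card A" "\<forall>c\<in>A. real (nsides k c) \<le> delta k r" by blast
  moreover obtain C where "C \<subseteq> A" "card C = r" using obtain_subset_with_card_n \<open>r \<le> card A\<close> by metis
  ultimately show ?thesis by blast
qed

lemma exists_cells_nsides_ge_delta:
  assumes k: "k \<ge> 1" and r: "1 \<le> r" "r \<le> k * k"
  shows "\<exists>C \<subseteq> cluster_vertices k. card C = k * k - r + 1 \<and> (\<forall>c\<in>C. delta k r \<le> real (nsides k c))"
proof -
  let ?CV = "cluster_vertices k"
  let ?Int = "{1..<k-1} \<times> {1..<k-1}"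
  let ?Co = "{(0,0), (0,k-1), (k-1,0), (k-1,k-1)}"
  have "\<exists>A \<subseteq> ?CV. k * k - r + 1 \<le> card A \<and> (\<forall>c\<in>A. delta k r \<le> real (nsides k c))"
  proof (cases "delta k r = 0")
    case True
    then show ?thesis using r card_cluster_vertices[of k] by (intro exI[of _ ?CV]) auto
  next
    case False
    have k2: "k \<ge> 2"
    proof (rule ccontr)
      assume "\<not> k \<ge> 2"
      then have "k = 1" using k by simp
      then show False using False r by (simp add: delta_def)
    qed
    have r_gt: "\<not> r \<le> (k-2)*(k-2)" using False delta_eq[OF k2] by auto
    show ?thesis
    proof (cases "r \<le> k*k - 4")
      case True
      have "?Int \<subseteq> ?CV" by (auto simp: cluster_vertices_def)
      then have "card (?CV - ?Int) = k * k - (k-2)*(k-2)"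
        by (simp add: card_Diff_subset card_cluster_vertices card_cartesian_product numeral_2_eq_2)
      moreover have "(k-2)*(k-2) \<le> k*k" by (simp add: mult_le_mono)
      ultimately have "k * k - r + 1 \<le> card (?CV - ?Int)" using r r_gt by linarith
      then show ?thesis using True r_gt nsides_bounds(4)[OF _ k2] delta_eq[OF k2]
        by (intro exI[of _ "?CV - ?Int"]) auto
    next
      case False
      then show ?thesis using r r_gt card_corner_cells[OF k2] nsides_bounds(5)[OF _ k2] delta_eq[OF k2]
        by (intro exI[of _ ?Co]) auto
    qed
  qed
  then obtain A where "A \<subseteq> ?CV" "k * k - r + 1 \<le> card A" "\<forall>c\<in>A. delta k r \<le> real (nsides k c)"
    by blast
  moreover obtain C where "C \<subseteq> A" "card C = k * k - r + 1"
    using obtain_subset_with_card_n \<open>k * k - r + 1 \<le> card A\<close> by metis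
  ultimately show ?thesis by blast
qed

section \<open>The Goldberg--Coxeter graph\<close>

locale goldberg_coxeter =
  fixes V :: "'v set" and E :: "'v \<Rightarrow> 'v \<Rightarrow> bool" and rot :: "'v \<Rightarrow> nat \<Rightarrow> 'v" and k :: nat
  assumes simple: "simple_graph V E" and orient: "orientation V E rot" and k_pos: "k \<ge> 1"
begin

abbreviation GV where "GV \<equiv> gc_vertices V k"
abbreviation CV where "CV \<equiv> cluster_vertices k"

lemma finite_V: "finite V"
  using simple by (simp add: simple_graph_def)

lemma edge_sym: "E p q \<Longrightarrow> E q p"
  using simple by (simp add: simple_graph_def)

lemma edge_in_V: "E p q \<Longrightarrow> p \<in> V \<and> q \<in> V \<and> p \<noteq> q"
  using simple by (simp add: simple_graph_def)

lemma rot_bij: "p \<in> V \<Longrightarrow> bij_betw (rot p) {0..<4} {q \<in> V. E p q}"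
  using orient by (simp add: orientation_def)

lemma rot_edge: "p \<in> V \<Longrightarrow> a < 4 \<Longrightarrow> E p (rot p a) \<and> rot p a \<in> V"
  using rot_bij[of p] by (auto simp: bij_betw_def)

lemma rot_inj: "p \<in> V \<Longrightarrow> a < 4 \<Longrightarrow> b < 4 \<Longrightarrow> rot p a = rot p b \<Longrightarrow> a = b"
  using rot_bij[of p] by (auto simp: bij_betw_def inj_on_def)

lemma rot_surj:
  assumes "p \<in> V" "E p q"
  shows "\<exists>a<4. rot p a = q"
proof -
  have "q \<in> rot p ` {0..<4}" using rot_bij[OF assms(1)] assms(2) edge_in_V by (auto simp: bij_betw_def)
  then show ?thesis by auto
qed

definition back_side :: "'v \<Rightarrow> nat \<Rightarrow> nat" where
  "back_side p a = (THE b. b < 4 \<and> rot (rot p a) b = p)"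

lemma back_side:
  assumes p: "p \<in> V" and a: "a < 4"
  shows "back_side p a < 4 \<and> rot (rot p a) (back_side p a) = p"
  unfolding back_side_def
proof (rule theI')
  have q: "rot p a \<in> V" "E (rot p a) p" using rot_edge[OF p a] edge_sym by auto
  obtain b where "b < 4" "rot (rot p a) b = p" using rot_surj[OF q] by blast
  then show "\<exists>!b. b < 4 \<and> rot (rot p a) b = p" using rot_inj[OF q(1)] by (intro ex1I[of _ b]) auto
qed

lemma back_side_unique:
  assumes "p \<in> V" "a < 4" "b < 4" "rot (rot p a) b = p"
  shows "b = back_side p a"
proof -
  have "rot p a \<in> V" using rot_edge[OF assms(1,2)] by simp
  then show ?thesis using assms(3,4) back_side[OF assms(1,2)] rot_inj by metis
qed

text \<open>The neighbour of cell \<open>c\<close> of the copy of \<open>p\<close> in direction \<open>a\<close>: a cell of the same copy,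
  or, if \<open>c\<close> lies on side \<open>a\<close>, the facing cell of the copy glued along that side.\<close>
definition gc_step :: "'v \<Rightarrow> nat \<times> nat \<Rightarrow> nat \<Rightarrow> 'v \<times> (nat \<times> nat)" where
  "gc_step p c a = (if on_side k c a
     then (rot p a, boundary_cell k (back_side p a) (k - 1 - side_position k c a))
     else (p, grid_step c a))"

lemma gc_step_neighbour:
  assumes p: "p \<in> V" and c: "c \<in> CV" and a: "a < 4"
  shows "gc_step p c a \<in> GV \<and> gc_adj E rot k (p, c) (gc_step p c a)"
proof (cases "on_side k c a")
  case True
  let ?t = "side_position k c a"
  have t: "?t < k" "c = boundary_cell k a ?t" using on_side_boundary_cell[OF c a True] by auto
  have b: "back_side p a < 4" "rot (rot p a) (back_side p a) = p" using back_side[OF p a] by auto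
  have "k - 1 - (k - 1 - ?t) = ?t" using t(1) by simp
  then have "\<exists>a'<4. \<exists>b<4. \<exists>t<k. rot p a' = rot p a \<and> rot (rot p a) b = p \<and> c = boundary_cell k a' t \<and>
      boundary_cell k (back_side p a) (k - 1 - ?t) = boundary_cell k b (k - 1 - t)"
    using a b t by (intro exI[of _ a] exI[of _ "back_side p a"] exI[of _ ?t]) auto
  moreover have "boundary_cell k (back_side p a) (k - 1 - ?t) \<in> CV"
    using boundary_cell_in_cluster b(1) k_pos by simp
  ultimately show ?thesis
    using True rot_edge[OF p a] unfolding gc_step_def gc_adj_def gc_vertices_def by simp
next
  case False
  then show ?thesis unfolding gc_step_def gc_adj_def gc_vertices_def
    using p grid_step_in_cluster[OF c a False] by simp
qed

lemma gc_adj_imp_gc_step: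
  assumes p: "p \<in> V" and c: "c \<in> CV" and w: "w \<in> GV" and adj: "gc_adj E rot k (p, c) w"
  shows "\<exists>a<4. w = gc_step p c a"
proof -
  obtain q d where w_eq: "w = (q, d)" by (cases w)
  have d: "d \<in> CV" using w w_eq by (simp add: gc_vertices_def)
  from adj consider "q = p \<and> grid_adj c d"
    | a b t where "a < 4" "b < 4" "t < k" "rot p a = q" "rot q b = p"
        "c = boundary_cell k a t" "d = boundary_cell k b (k - 1 - t)"
    unfolding gc_adj_def w_eq fst_conv snd_conv by blast
  then show ?thesis
  proof cases
    case 1
    then show ?thesis using grid_adj_imp_grid_step[OF c d] w_eq by (auto simp: gc_step_def)
  next
    case (2 a b t)
    have "on_side k c a" using boundary_cell_iff_on_side[OF c \<open>a < 4\<close>] 2 by blast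
    moreover have "side_position k c a = t" using side_position_boundary_cell[OF c] 2 by blast
    moreover have "b = back_side p a" using back_side_unique[OF p] 2 by blast
    ultimately show ?thesis using 2 w_eq by (auto simp: gc_step_def)
  qed
qed

lemma gc_step_inj:
  assumes p: "p \<in> V" and c: "c \<in> CV"
  shows "inj_on (gc_step p c) {0..<4}"
proof (rule inj_onI)
  fix a b assume a: "a \<in> {0..<4::nat}" and b: "b \<in> {0..<4::nat}" and eq: "gc_step p c a = gc_step p c b"
  have no_loop: "rot p x \<noteq> p" if "x < 4" for x using rot_edge[OF p that] edge_in_V[of p "rot p x"] by auto
  consider "on_side k c a" "on_side k c b" | "on_side k c a \<noteq> on_side k c b"
    | "\<not> on_side k c a" "\<not> on_side k c b" by blast
  then show "a = b"
  proof cases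
    case 1
    then show ?thesis using eq a b rot_inj[OF p] by (simp add: gc_step_def)
  next
    case 2
    then show ?thesis using eq a b no_loop by (auto simp: gc_step_def eq_commute[of p] split: if_splits)
  next
    case 3
    then show ?thesis using eq a b grid_step_inj[OF c] by (simp add: gc_step_def)
  qed
qed

lemma gc_degree:
  assumes "p \<in> V" "c \<in> CV"
  shows "card {w \<in> GV. gc_adj E rot k (p, c) w} = 4"
proof -
  have "{w \<in> GV. gc_adj E rot k (p, c) w} = gc_step p c ` {0..<4}"
  proof
    show "{w \<in> GV. gc_adj E rot k (p, c) w} \<subseteq> gc_step p c ` {0..<4}"
    proof
      fix w assume "w \<in> {w \<in> GV. gc_adj E rot k (p, c) w}"
      then obtain a where "a < 4" "w = gc_step p c a" using gc_adj_imp_gc_step[OF assms] by blast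
      then show "w \<in> gc_step p c ` {0..<4}" by auto
    qed
  qed (use gc_step_neighbour[OF assms] in auto)
  then show ?thesis using card_image[OF gc_step_inj[OF assms]] by simp
qed

lemma gc_adj_sym: "gc_adj E rot k x y \<Longrightarrow> gc_adj E rot k y x"
proof -
  assume "gc_adj E rot k x y"
  then consider "fst x = fst y" "grid_adj (snd x) (snd y)"
    | a b t where "E (fst x) (fst y)" "a < 4" "b < 4" "t < k" "rot (fst x) a = fst y"
        "rot (fst y) b = fst x" "snd x = boundary_cell k a t" "snd y = boundary_cell k b (k - 1 - t)"
    unfolding gc_adj_def by blast
  then show ?thesis
  proof cases
    case 1
    then show ?thesis unfolding gc_adj_def using grid_adj_sym by auto
  next
    case (2 a b t)
    then have "k - 1 - t < k" "snd x = boundary_cell k a (k - 1 - (k - 1 - t))" using k_pos by auto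
    then show ?thesis unfolding gc_adj_def using 2 edge_sym by blast
  qed
qed

lemma gc_adj_same_copy: "p \<in> V \<Longrightarrow> gc_adj E rot k (p, c) (p, d) = grid_adj c d"
  unfolding gc_adj_def using edge_in_V by auto


abbreviation LG where "LG \<equiv> lap_matrix GV (gc_adj E rot k)"
abbreviation Lg where "Lg \<equiv> lap_matrix CV grid_adj"
abbreviation Ag where "Ag \<equiv> adj_matrix CV grid_adj"

lemma finite_GV: "finite GV"
  using finite_V by (simp add: gc_vertices_def cluster_vertices_def)

lemma card_CV_le_card_GV:
  assumes "p \<in> V"
  shows "card CV \<le> card GV"
proof -
  have "{p} \<times> CV \<subseteq> GV" using assms by (auto simp: gc_vertices_def)
  then have "card ({p} \<times> CV) \<le> card GV" by (rule card_mono[OF finite_GV])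
  then show ?thesis by (simp add: card_cartesian_product)
qed

lemma LG_sym: "LG a b = LG b a"
  by (rule lap_matrix_sym) (rule gc_adj_sym)

lemma gc_lap_same_copy:
  assumes "p \<in> V" "c \<in> CV"
  shows "LG (p, c) (p, d) = (if c = d then 4 else 0) - (if grid_adj c d then 1 else 0)"
  unfolding lap_matrix_def using gc_degree[OF assms] gc_adj_same_copy[OF assms(1)] by (cases "c = d") simp_all

lemma grid_lap_eq:
  assumes "c \<in> CV"
  shows "Lg c d = (if c = d then 4 - real (nsides k c) else 0) - (if grid_adj c d then 1 else 0)"
proof -
  have "real (card {d \<in> CV. grid_adj c d}) + real (nsides k c) = 4"
    using grid_degree[OF assms] by (metis of_nat_add of_nat_numeral)
  then show ?thesis unfolding lap_matrix_def by (cases "c = d") auto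
qed

definition copy_embed :: "'v \<Rightarrow> (nat \<times> nat \<Rightarrow> real) \<Rightarrow> 'v \<times> (nat \<times> nat) \<Rightarrow> real" where
  "copy_embed p z = (\<lambda>(q, c). if q = p then z c else 0)"

lemma copy_embed_simps [simp]: "copy_embed p z (p, c) = z c" "q \<noteq> p \<Longrightarrow> copy_embed p z (q, c) = 0"
  by (simp_all add: copy_embed_def)

lemma sum_single_copy:
  assumes "p \<in> V" "\<And>q c. q \<in> V \<Longrightarrow> c \<in> CV \<Longrightarrow> q \<noteq> p \<Longrightarrow> f (q, c) = 0"
  shows "(\<Sum>w\<in>GV. f w) = (\<Sum>c\<in>CV. f (p, c))"
proof -
  have "(\<Sum>w\<in>GV. f w) = (\<Sum>q\<in>V. \<Sum>c\<in>CV. f (q, c))"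
    unfolding gc_vertices_def by (rule sum.cartesian_product')
  also have "\<dots> = (\<Sum>c\<in>CV. f (p, c)) + (\<Sum>q\<in>V - {p}. \<Sum>c\<in>CV. f (q, c))"
    using finite_V assms(1) by (simp add: sum.remove)
  finally show ?thesis using assms(2) by simp
qed

lemma inner_on_copy_embed: "p \<in> V \<Longrightarrow> inner_on GV (copy_embed p z) (copy_embed p z) = inner_on CV z z"
  unfolding inner_on_def by (subst sum_single_copy) auto

lemma quad_form_copy_embed:
  assumes p: "p \<in> V"
  shows "quad_form GV LG (copy_embed p z) = quad_form CV (\<lambda>c d. LG (p, c) (p, d)) z"
proof -
  have "quad_form GV LG (copy_embed p z) = (\<Sum>c\<in>CV. \<Sum>w\<in>GV. z c * LG (p, c) w * copy_embed p z w)"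
    unfolding quad_form_def by (subst sum_single_copy[OF p]) simp_all
  also have "\<dots> = quad_form CV (\<lambda>c d. LG (p, c) (p, d)) z"
    unfolding quad_form_def by (intro sum.cong refl, subst sum_single_copy[OF p]) simp_all
  finally show ?thesis .
qed

lemma quad_form_copy_embed_adj:
  assumes p: "p \<in> V"
  shows "quad_form GV LG (copy_embed p z) = 4 * inner_on CV z z - quad_form CV Ag z"
proof -
  have "quad_form GV LG (copy_embed p z) = quad_form CV (\<lambda>c d. - Ag c d + (if c = d then 4 else 0)) z"
    unfolding quad_form_copy_embed[OF p]
    by (rule quad_form_matrix_cong) (simp add: gc_lap_same_copy[OF p] adj_matrix_def)
  also have "\<dots> = - quad_form CV Ag z + 4 * inner_on CV z z"
    unfolding quad_form_add_diagonal[OF finite_cluster_vertices]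
    by (simp add: quad_form_def inner_on_def sum_negf sum_distrib_left power2_eq_square)
  finally show ?thesis by simp
qed

lemma quad_form_copy_embed_lap:
  assumes p: "p \<in> V"
  shows "quad_form GV LG (copy_embed p z) = quad_form CV Lg z + (\<Sum>c\<in>CV. real (nsides k c) * (z c)\<^sup>2)"
proof -
  have "quad_form GV LG (copy_embed p z) =
      quad_form CV (\<lambda>c d. Lg c d + (if c = d then real (nsides k c) else 0)) z"
    unfolding quad_form_copy_embed[OF p]
    by (rule quad_form_matrix_cong) (simp add: gc_lap_same_copy[OF p] grid_lap_eq)
  then show ?thesis by (simp add: quad_form_add_diagonal[OF finite_cluster_vertices])
qed

lemma lincomb_copy_embed: "lincomb J \<beta> (\<lambda>i. copy_embed p (w i)) = copy_embed p (lincomb J \<beta> w)"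
  by (intro ext) (simp add: lincomb_def copy_embed_def split: prod.split)

lemma copy_embed_independent:
  assumes p: "p \<in> V" and orth: "orthonormal_on CV J w" and "finite J"
    and "\<forall>s\<in>GV. lincomb J \<beta> (\<lambda>i. copy_embed p (w i)) s = 0"
  shows "\<forall>i\<in>J. \<beta> i = 0"
proof -
  have "lincomb J \<beta> w c = 0" if "c \<in> CV" for c
  proof -
    have "(p, c) \<in> GV" using p that by (simp add: gc_vertices_def)
    then have "copy_embed p (lincomb J \<beta> w) (p, c) = 0" using assms(4) unfolding lincomb_copy_embed by blast
    then show ?thesis by simp
  qed
  then show ?thesis using lincomb_orthonormal_eq_0[OF orth \<open>finite J\<close>] by blast
qed

lemma grid_adj_matrix_sym: "Ag a b = Ag b a"
  by (rule adj_matrix_sym) (rule grid_adj_sym)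

lemma grid_lap_matrix_sym: "Lg a b = Lg b a"
  by (rule lap_matrix_sym) (rule grid_adj_sym)

lemma gc_eigenvalue_le_adj:
  assumes p: "p \<in> V" and j: "1 \<le> j" "j \<le> card CV"
  shows "eigenvalues GV LG ! (j - 1) \<le> 4 - eigenvalues CV Ag ! (card CV - j)"
proof -
  let ?m = "card CV" and ?\<nu> = "eigenvalues CV Ag"
  obtain w where w: "eigenbasis CV Ag w"
    using symmetric_eigenbasis(3)[of CV Ag, OF finite_cluster_vertices grid_adj_matrix_sym] by blast
  define J where "J = {?m - j..<?m}"
  have "J \<subseteq> {..<?m}" by (auto simp: J_def)
  then have orth: "orthonormal_on CV J w" using w orthonormal_on_subset unfolding eigenbasis_def by blast
  let ?u = "\<lambda>i. copy_embed p (w i)"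
  show ?thesis
  proof (rule eigenvalue_le_of_test_family[where J = J and Z = "{}" and u = ?u])
    show "j \<le> card GV" using j card_CV_le_card_GV[OF p] by simp
    show "card {} + j \<le> card J" using j by (simp add: J_def)
    show "\<forall>i\<in>J. \<beta> i = 0" if "\<forall>s\<in>GV. lincomb J \<beta> ?u s = 0" for \<beta>
      using copy_embed_independent[OF p orth] that by (simp add: J_def)
    fix \<beta>
    let ?z = "lincomb J \<beta> w" and ?x = "lincomb J \<beta> ?u"
    have "?\<nu> ! (?m - j) * inner_on CV ?z ?z \<le> quad_form CV Ag ?z"
      by (rule eigenbasis_quad_form_ge[OF finite_cluster_vertices grid_adj_matrix_sym w]) (auto simp: J_def)
    then show "quad_form GV LG ?x \<le> (4 - ?\<nu> ! (?m - j)) * inner_on GV ?x ?x"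
      unfolding lincomb_copy_embed quad_form_copy_embed_adj[OF p] inner_on_copy_embed[OF p]
      by (simp add: algebra_simps)
  qed (use j finite_GV LG_sym in \<open>auto simp: J_def\<close>)
qed


lemma gc_eigenvalue_ge_adj:
  assumes p: "p \<in> V" and j: "1 \<le> j" "j \<le> card CV"
  shows "4 - eigenvalues CV Ag ! (j - 1) \<le> eigenvalues GV LG ! (card GV - j)"
proof -
  let ?\<nu> = "eigenvalues CV Ag"
  obtain w where w: "eigenbasis CV Ag w"
    using symmetric_eigenbasis(3)[of CV Ag, OF finite_cluster_vertices grid_adj_matrix_sym] by blast
  define J where "J = {..<j}"
  have "J \<subseteq> {..<card CV}" using j by (auto simp: J_def)
  then have orth: "orthonormal_on CV J w" using w orthonormal_on_subset unfolding eigenbasis_def by blast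
  let ?u = "\<lambda>i. copy_embed p (w i)"
  show ?thesis
  proof (rule eigenvalue_ge_of_test_family[where J = J and Z = "{}" and u = ?u])
    show "j \<le> card GV" using j card_CV_le_card_GV[OF p] by simp
    show "\<forall>i\<in>J. \<beta> i = 0" if "\<forall>s\<in>GV. lincomb J \<beta> ?u s = 0" for \<beta>
      using copy_embed_independent[OF p orth] that by (simp add: J_def)
    fix \<beta>
    let ?z = "lincomb J \<beta> w" and ?x = "lincomb J \<beta> ?u"
    have "quad_form CV Ag ?z \<le> ?\<nu> ! (j - 1) * inner_on CV ?z ?z"
      by (rule eigenbasis_quad_form_le[OF finite_cluster_vertices grid_adj_matrix_sym w]) (use j in \<open>auto simp: J_def\<close>)
    then show "(4 - ?\<nu> ! (j - 1)) * inner_on GV ?x ?x \<le> quad_form GV LG ?x"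
      unfolding lincomb_copy_embed quad_form_copy_embed_adj[OF p] inner_on_copy_embed[OF p]
      by (simp add: algebra_simps)
  qed (use j finite_GV LG_sym in \<open>auto simp: J_def\<close>)
qed

lemma card_copy_complement:
  assumes "C \<subseteq> CV"
  shows "card (Pair p ` (CV - C)) = card CV - card C"
  using assms finite_subset[OF assms finite_cluster_vertices]
  by (simp add: card_image card_Diff_subset inj_on_def)

lemma copy_embed_vanishes_outside:
  assumes "\<forall>x\<in>Pair p ` (CV - C). copy_embed p z x = 0" "c \<in> CV" "z c \<noteq> 0"
  shows "c \<in> C"
  using assms by force

lemma least_eigenvalue_le_grid_k1:
  assumes p: "p \<in> V" and k1: "k = 1"
  shows "eigenvalues GV LG ! 0 \<le> eigenvalues CV Lg ! 0"
proof -
  have CV: "CV = {(0, 0)}" using k1 by (auto simp: cluster_vertices_def)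
  then have "GV \<noteq> {}" using p by (auto simp: gc_vertices_def)
  then have "eigenvalues GV LG ! 0 \<le> 0"
    using lap_matrix_least_eigenvalue_nonpos[OF finite_GV] gc_adj_sym by blast
  moreover have "eigenvalues CV Lg ! 0 = 0"
    unfolding CV eigenvalues_singleton by (simp add: lap_matrix_def grid_adj_def)
  ultimately show ?thesis by simp
qed

lemma gc_eigenvalue_le_lap:
  assumes p: "p \<in> V" and it: "1 \<le> i" "i \<le> t" "t \<le> card CV"
  shows "eigenvalues GV LG ! (i - 1) \<le> eigenvalues CV Lg ! (t - 1) + delta k (card CV - t + i)"
proof (cases "k = 1")
  case True
  then have "i = 1" "t = 1" "card CV = 1" using it by (simp_all add: card_cluster_vertices)
  then show ?thesis using least_eigenvalue_le_grid_k1[OF p True] True by (simp add: delta_def)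
next
  case False
  then have k2: "k \<ge> 2" using k_pos by simp
  define r where "r = card CV - t + i"
  have "r \<le> k * k" using it by (simp add: r_def card_cluster_vertices)
  then obtain C where C: "C \<subseteq> CV" "card C = r" and C_sides: "\<forall>c\<in>C. real (nsides k c) \<le> delta k r"
    using exists_cells_nsides_le_delta[OF k2] by blast
  obtain w where w: "eigenbasis CV Lg w"
    using symmetric_eigenbasis(3)[of CV Lg, OF finite_cluster_vertices grid_lap_matrix_sym] by blast
  define J where "J = {..<t}"
  define Z where "Z = Pair p ` (CV - C)"
  have "J \<subseteq> {..<card CV}" using it by (auto simp: J_def)
  then have orth: "orthonormal_on CV J w" using w orthonormal_on_subset unfolding eigenbasis_def by blast
  have card_Z: "card Z + i \<le> card J" using it C by (simp add: Z_def J_def card_copy_complement r_def)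
  let ?u = "\<lambda>i. copy_embed p (w i)"
  show ?thesis unfolding r_def[symmetric]
  proof (rule eigenvalue_le_of_test_family[where J = J and Z = Z and u = ?u])
    show "i \<le> card GV" using it card_CV_le_card_GV[OF p] by simp
    show "\<forall>i\<in>J. \<beta> i = 0" if "\<forall>s\<in>GV. lincomb J \<beta> ?u s = 0" for \<beta>
      using copy_embed_independent[OF p orth] that by (simp add: J_def)
    fix \<beta>
    let ?z = "lincomb J \<beta> w" and ?x = "lincomb J \<beta> ?u"
    assume "\<forall>y\<in>Z. ?x y = 0"
    then have supp: "\<And>c. c \<in> CV \<Longrightarrow> ?z c \<noteq> 0 \<Longrightarrow> c \<in> C"
      using copy_embed_vanishes_outside unfolding Z_def lincomb_copy_embed by blast
    have "quad_form CV Lg ?z \<le> eigenvalues CV Lg ! (t - 1) * inner_on CV ?z ?z"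
      by (rule eigenbasis_quad_form_le[OF finite_cluster_vertices grid_lap_matrix_sym w]) (use it in \<open>auto simp: J_def\<close>)
    moreover have "(\<Sum>c\<in>CV. real (nsides k c) * (?z c)\<^sup>2) \<le> (\<Sum>c\<in>CV. delta k r * (?z c)\<^sup>2)"
      by (rule sum_weighted_squares_mono) (use supp C_sides in blast)
    ultimately show "quad_form GV LG ?x \<le> (eigenvalues CV Lg ! (t - 1) + delta k r) * inner_on GV ?x ?x"
      unfolding lincomb_copy_embed quad_form_copy_embed_lap[OF p] inner_on_copy_embed[OF p]
      by (simp add: algebra_simps inner_on_def sum_distrib_left power2_eq_square)
  qed (use it card_Z finite_GV LG_sym finite_cluster_vertices in \<open>auto simp: J_def Z_def\<close>)
qed

lemma gc_eigenvalue_ge_lap: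
  assumes p: "p \<in> V" and js: "1 \<le> j" "j \<le> s" "s \<le> card CV"
  shows "eigenvalues CV Lg ! (card CV - s) + delta k (1 + s - j) \<le> eigenvalues GV LG ! (card GV - j)"
proof -
  define r where "r = 1 + s - j"
  have "1 \<le> r" "r \<le> k * k" using js by (simp_all add: r_def card_cluster_vertices)
  then obtain C where C: "C \<subseteq> CV" "card C = k * k - r + 1"
    and C_sides: "\<forall>c\<in>C. delta k r \<le> real (nsides k c)"
    using exists_cells_nsides_ge_delta[OF k_pos] by blast
  obtain w where w: "eigenbasis CV Lg w"
    using symmetric_eigenbasis(3)[of CV Lg, OF finite_cluster_vertices grid_lap_matrix_sym] by blast
  define J where "J = {card CV - s..<card CV}"
  define Z where "Z = Pair p ` (CV - C)"
  have "J \<subseteq> {..<card CV}" by (auto simp: J_def)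
  then have orth: "orthonormal_on CV J w" using w orthonormal_on_subset unfolding eigenbasis_def by blast
  have card_Z: "card Z + j \<le> card J"
    using js C \<open>1 \<le> r\<close> \<open>r \<le> k * k\<close> by (simp add: Z_def J_def card_copy_complement r_def card_cluster_vertices)
  let ?u = "\<lambda>i. copy_embed p (w i)"
  show ?thesis unfolding r_def[symmetric]
  proof (rule eigenvalue_ge_of_test_family[where J = J and Z = Z and u = ?u])
    show "j \<le> card GV" using js card_CV_le_card_GV[OF p] by simp
    show "\<forall>i\<in>J. \<beta> i = 0" if "\<forall>s\<in>GV. lincomb J \<beta> ?u s = 0" for \<beta>
      using copy_embed_independent[OF p orth] that by (simp add: J_def)
    fix \<beta>
    let ?z = "lincomb J \<beta> w" and ?x = "lincomb J \<beta> ?u"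
    assume "\<forall>y\<in>Z. ?x y = 0"
    then have supp: "\<And>c. c \<in> CV \<Longrightarrow> ?z c \<noteq> 0 \<Longrightarrow> c \<in> C"
      using copy_embed_vanishes_outside unfolding Z_def lincomb_copy_embed by blast
    have "eigenvalues CV Lg ! (card CV - s) * inner_on CV ?z ?z \<le> quad_form CV Lg ?z"
      by (rule eigenbasis_quad_form_ge[OF finite_cluster_vertices grid_lap_matrix_sym w]) (auto simp: J_def)
    moreover have "(\<Sum>c\<in>CV. delta k r * (?z c)\<^sup>2) \<le> (\<Sum>c\<in>CV. real (nsides k c) * (?z c)\<^sup>2)"
      by (rule sum_weighted_squares_mono) (use supp C_sides in blast)
    ultimately show "(eigenvalues CV Lg ! (card CV - s) + delta k r) * inner_on GV ?x ?x \<le> quad_form GV LG ?x"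
      unfolding lincomb_copy_embed quad_form_copy_embed_lap[OF p] inner_on_copy_embed[OF p]
      by (simp add: algebra_simps inner_on_def sum_distrib_left power2_eq_square)
  qed (use js card_Z finite_GV LG_sym finite_cluster_vertices in \<open>auto simp: J_def Z_def\<close>)
qed

end

theorem theorem3p3:
  fixes V :: "'v set" and E :: "'v \<Rightarrow> 'v \<Rightarrow> bool" and rot :: "'v \<Rightarrow> nat \<Rightarrow> 'v" and k :: nat
  assumes "simple_graph V E" and "connected_graph V E" and "four_valent V E"
    and "orientation V E rot" and "k \<ge> 1"
  defines "N \<equiv> card (gc_vertices V k)"
    and "lamGC \<equiv> eigenvalues (gc_vertices V k) (lap_matrix (gc_vertices V k) (gc_adj E rot k))"
    and "nu \<equiv> eigenvalues (cluster_vertices k) (adj_matrix (cluster_vertices k) grid_adj)"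
    and "lam \<equiv> eigenvalues (cluster_vertices k) (lap_matrix (cluster_vertices k) grid_adj)"
  shows "(\<forall>j. 1 \<le> j \<and> j \<le> k^2 \<longrightarrow>
            lamGC ! (j - 1) \<le> 4 - nu ! (k^2 - j) \<and>
            lamGC ! (N - j) \<ge> 4 - nu ! (j - 1))
       \<and> (\<forall>i t. 1 \<le> i \<and> i \<le> t \<and> t \<le> k^2 \<longrightarrow>
            lamGC ! (i - 1) \<le> lam ! (t - 1) + delta k (k^2 - t + i))
       \<and> (\<forall>j s. 1 \<le> j \<and> j \<le> s \<and> s \<le> k^2 \<longrightarrow>
            lamGC ! (N - j) \<ge> lam ! (k^2 - s) + delta k (1 + s - j))"
proof -
  txt \<open>Four-valence is implied by the orientation; connectedness is only needed for \<open>V \<noteq> {}\<close>.\<close>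
  interpret goldberg_coxeter V E rot k
    using assms(1,4,5) by unfold_locales
  obtain p where p: "p \<in> V" using assms(2) unfolding connected_graph_def by blast
  have m: "card (cluster_vertices k) = k^2" by (simp add: card_cluster_vertices power2_eq_square)
  show ?thesis
    unfolding N_def lamGC_def nu_def lam_def m[symmetric]
    using gc_eigenvalue_le_adj[OF p] gc_eigenvalue_ge_adj[OF p]
      gc_eigenvalue_le_lap[OF p] gc_eigenvalue_ge_lap[OF p] by blast
qed

end
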